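(* Let $m\ge 1$, $1\le m_c\le m$, $T>0$, fix a nonnegative initial state, and consider the optimal control problem of minimizing \[ J(u)=\int_0^T\Big(\sum_{j=1}^{m_c}M_{j,i}+A_a u_a^2+A_s u_s^2+A_\kappa u_\kappa^2+\sum_{j=1}^{m_c}A_j u_j^2\Big)\,dt \] over measurable controls $u=(u_a,u_s,u_\kappa,u_1,\dots,u_{m_c}):[0,T]\to [0,u_{Amax}]\times[0,u_{Smax}]\times[0,u_{Kmax}]\times\prod_{j=1}^{m_c}[0,u_{Mmax,j}]$, subject to the state $x=(E,S_s,S_i,L,M_{1,s},M_{1,i},\dots,M_{m,s},M_{m,i})$ solving \[ \begin{aligned} E' &= \sum_{j=1}^{m}\theta_j M_{j,i} - \omega_s S_s E - \mu_e E - u_aE,\\ S_s' &= -\omega_s\beta_s S_s E + \alpha_s (S_s+S_i)\Big(1-\frac{u_\kappa(S_s+S_i)}{\kappa_s}\Big) - \mu_s S_s - u_sS_s,\\ S_i' &= \omega_s\beta_s S_s E - (\mu_s+\gamma_s) S_i - u_sS_i,\\ L' &= \nu_s S_i - \sum_{j=1}^{m}\omega_j M_{j,s} L - \mu_l L - u_aL,\\ M_{j,s}' &= -\omega_j\beta_j L M_{j,s} + \alpha_j - \mu_j M_{j,s}, \qquad 1\le j\le m,\\ M_{j,i}' &= \omega_j\beta_j L M_{j,s} - (\mu_j+\gamma_j) M_{j,i} - u_jM_{j,i}, \qquad 1\le j\le m, \end{aligned} \] with $u_j\equiv0$ for $j>m_c$. Let $\mathcal{H}(x,u,\Lambda)$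 be the Hamiltonian equal to the integrand of $J$ plus $\lambda_1 E'+\lambda_2 S_s'+\lambda_3 S_i'+\lambda_4 L'+\sum_{j=1}^m(\lambda_{j,s}M_{j,s}'+\lambda_{j,i}M_{j,i}')$ (each derivative replaced by the corresponding right-hand side above), where $\Lambda=(\lambda_1,\lambda_2,\lambda_3,\lambda_4,\lambda_{1,s},\lambda_{1,i},\dots,\lambda_{m,s},\lambda_{m,i})$. Let $u^*$ be an optimal control with optimal state $x$, and let $\Lambda$ be the adjoint variables solving $\Lambda'=-\partial\mathcal{H}/\partial x$ along $(x,u^* )$ with $\Lambda(T)=0$. Then, for $1\le j\le m_c$, \[ \begin{aligned} u_a^*(t)&=\max\Big(0,\min\Big(\frac{\lambda_1(t)E(t)+\lambda_4(t)L(t)}{2A_a},u_{Amax}\Big)\Big),\\ u_s^*(t)&=\max\Big(0,\min\Big(\frac{\lambda_2(t)S_s(t)+\lambda_3(t)S_i(t)}{2A_s},u_{Smax}\Big)\Big),\\ u_\kappa^*(t)&=\max\Big(0,\min\Big(\frac{\alpha_s\lambda_2(t)(S_s(t)+S_i(t))^2}{2\kappa_sA_\kappa},u_{Kmax}\Big)\Big),\\ u_j^*(t)&=\max\Big(0,\min\Big(\frac{\lambda_{j,i}(t)M_{j,i}(t)}{2A_j},u_{Mmax,j}\Big)\Big). \end{aligned} \]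
   Context: All model parameters $\theta_j,\omega_j,\beta_j,\alpha_j,\mu_j,\gamma_j$ ($1\le j\le m$), $\omega_s,\beta_s,\alpha_s,\kappa_s,\mu_s,\gamma_s,\nu_s,\mu_e,\mu_l$, the weights $A_a,A_s,A_\kappa,A_j$ and the control bounds are positive constants. State variables: $E$ eggs, $S_s,S_i$ susceptible/infected snails, $L$ larvae, $M_{j,s},M_{j,i}$ susceptible/infected mammals of species $j$. Controls: $u_a$ aquatic control, $u_s$ molluscicide, $u_\kappa$ habitat modification (the paper writes the logistic term as $1-\frac{S_s+S_i}{\kappa_s/u_\kappa}$), $u_j$ treatment of mammal species $j$. *)

theory Defs
  imports "HOL-Analysis.Analysis"
begin

datatype coord = CE | CSs | CSi | CL | CMs nat | CMi nat

datatype cidx = Ua | Us | Uk | Uj nat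

definition coords :: "nat \<Rightarrow> coord set" where
  "coords m = {CE, CSs, CSi, CL} \<union> CMs ` {1..m} \<union> CMi ` {1..m}"

record params =
  theta :: "nat \<Rightarrow> real"
  omega :: "nat \<Rightarrow> real"
  beta :: "nat \<Rightarrow> real"
  alpha :: "nat \<Rightarrow> real"
  mu :: "nat \<Rightarrow> real"
  gamma :: "nat \<Rightarrow> real"
  omega_s :: real
  beta_s :: real
  alpha_s :: real
  kappa_s :: real
  mu_s :: real
  gamma_s :: real
  nu_s :: real
  mu_e :: real
  mu_l :: real
  A_a :: real
  A_s :: real
  A_k :: real
  A_j :: "nat \<Rightarrow> real"
  uAmax :: real
  uSmax :: real
  uKmax :: real
  uMmax :: "nat \<Rightarrow> real"

definition pos_params :: "params \<Rightarrow> nat \<Rightarrow> nat \<Rightarrow> bool" where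
  "pos_params p m mc \<longleftrightarrow>
     (\<forall>j\<in>{1..m}. theta p j > 0 \<and> omega p j > 0 \<and> beta p j > 0 \<and> alpha p j > 0
                 \<and> mu p j > 0 \<and> gamma p j > 0) \<and>
     omega_s p > 0 \<and> beta_s p > 0 \<and> alpha_s p > 0 \<and> kappa_s p > 0 \<and> mu_s p > 0 \<and>
     gamma_s p > 0 \<and> nu_s p > 0 \<and> mu_e p > 0 \<and> mu_l p > 0 \<and>
     A_a p > 0 \<and> A_s p > 0 \<and> A_k p > 0 \<and> uAmax p > 0 \<and> uSmax p > 0 \<and> uKmax p > 0 \<and>
     (\<forall>j\<in>{1..mc}. A_j p j > 0 \<and> uMmax p j > 0)"

fun rhs :: "params \<Rightarrow> nat \<Rightarrow> (cidx \<Rightarrow> real) \<Rightarrow> (coord \<Rightarrow> real) \<Rightarrow> coord \<Rightarrow> real" where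
  "rhs p m u x CE = (\<Sum>j=1..m. theta p j * x (CMi j)) - omega_s p * x CSs * x CE
       - mu_e p * x CE - u Ua * x CE"
| "rhs p m u x CSs = - omega_s p * beta_s p * x CSs * x CE
       + alpha_s p * (x CSs + x CSi) * (1 - u Uk * (x CSs + x CSi) / kappa_s p)
       - mu_s p * x CSs - u Us * x CSs"
| "rhs p m u x CSi = omega_s p * beta_s p * x CSs * x CE - (mu_s p + gamma_s p) * x CSi
       - u Us * x CSi"
| "rhs p m u x CL = nu_s p * x CSi - (\<Sum>j=1..m. omega p j * x (CMs j) * x CL)
       - mu_l p * x CL - u Ua * x CL"
| "rhs p m u x (CMs j) = - omega p j * beta p j * x CL * x (CMs j) + alpha p j
       - mu p j * x (CMs j)"
| "rhs p m u x (CMi j) = omega p j * beta p j * x CL * x (CMs j)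
       - (mu p j + gamma p j) * x (CMi j) - u (Uj j) * x (CMi j)"

definition running_cost :: "params \<Rightarrow> nat \<Rightarrow> (coord \<Rightarrow> real) \<Rightarrow> (cidx \<Rightarrow> real) \<Rightarrow> real" where
  "running_cost p mc x u =
     (\<Sum>j=1..mc. x (CMi j)) + A_a p * (u Ua)\<^sup>2 + A_s p * (u Us)\<^sup>2 + A_k p * (u Uk)\<^sup>2
     + (\<Sum>j=1..mc. A_j p j * (u (Uj j))\<^sup>2)"

definition cost_J :: "params \<Rightarrow> nat \<Rightarrow> real \<Rightarrow> (real \<Rightarrow> coord \<Rightarrow> real) \<Rightarrow> (real \<Rightarrow> cidx \<Rightarrow> real) \<Rightarrow> real" where
  "cost_J p mc T x u = (LINT t:{0..T}|lborel. running_cost p mc (x t) (u t))"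

definition hamiltonian :: "params \<Rightarrow> nat \<Rightarrow> nat \<Rightarrow> (coord \<Rightarrow> real) \<Rightarrow> (cidx \<Rightarrow> real) \<Rightarrow> (coord \<Rightarrow> real) \<Rightarrow> real" where
  "hamiltonian p m mc x u lam = running_cost p mc x u + (\<Sum>c\<in>coords m. lam c * rhs p m u x c)"

definition admissible :: "params \<Rightarrow> nat \<Rightarrow> real \<Rightarrow> (real \<Rightarrow> cidx \<Rightarrow> real) \<Rightarrow> bool" where
  "admissible p mc T u \<longleftrightarrow>
     (\<forall>c. set_borel_measurable lborel {0..T} (\<lambda>t. u t c)) \<and>
     (\<forall>t\<in>{0..T}. 0 \<le> u t Ua \<and> u t Ua \<le> uAmax p \<and> 0 \<le> u t Us \<and> u t Us \<le> uSmax p \<and>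
        0 \<le> u t Uk \<and> u t Uk \<le> uKmax p \<and>
        (\<forall>j\<in>{1..mc}. 0 \<le> u t (Uj j) \<and> u t (Uj j) \<le> uMmax p j) \<and>
        (\<forall>j. j \<notin> {1..mc} \<longrightarrow> u t (Uj j) = 0))"

definition state_sol :: "params \<Rightarrow> nat \<Rightarrow> real \<Rightarrow> (coord \<Rightarrow> real) \<Rightarrow> (real \<Rightarrow> cidx \<Rightarrow> real)
     \<Rightarrow> (real \<Rightarrow> coord \<Rightarrow> real) \<Rightarrow> bool" where
  "state_sol p m T x0 u x \<longleftrightarrow>
     (\<forall>c\<in>coords m. x 0 c = x0 c \<and>
        (\<forall>t\<in>{0..T}. set_integrable lborel {0..t} (\<lambda>s. rhs p m (u s) (x s) c) \<and>
                    x t c - x 0 c = (LINT s:{0..t}|lborel. rhs p m (u s) (x s) c)))"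

definition dH_dx :: "params \<Rightarrow> nat \<Rightarrow> nat \<Rightarrow> coord \<Rightarrow> (coord \<Rightarrow> real) \<Rightarrow> (cidx \<Rightarrow> real) \<Rightarrow> (coord \<Rightarrow> real) \<Rightarrow> real" where
  "dH_dx p m mc c x u lam = deriv (\<lambda>z. hamiltonian p m mc (x(c := z)) u lam) (x c)"

definition adjoint_sol :: "params \<Rightarrow> nat \<Rightarrow> nat \<Rightarrow> real \<Rightarrow> (real \<Rightarrow> cidx \<Rightarrow> real)
     \<Rightarrow> (real \<Rightarrow> coord \<Rightarrow> real) \<Rightarrow> (real \<Rightarrow> coord \<Rightarrow> real) \<Rightarrow> bool" where
  "adjoint_sol p m mc T u x lam \<longleftrightarrow>
     (\<forall>c\<in>coords m. lam T c = 0 \<and>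
        (\<forall>t\<in>{0..T}. set_integrable lborel {t..T} (\<lambda>s. dH_dx p m mc c (x s) (u s) (lam s)) \<and>
            lam T c - lam t c = (LINT s:{t..T}|lborel. - dH_dx p m mc c (x s) (u s) (lam s))))"

end

theory Submission
  imports Defs
begin

text \<open>Only the part \<open>control_ham\<close> of the Hamiltonian depends on the control, and in each control
  it is a convex quadratic \<open>a u\<^sup>2 - c u\<close> on \<open>[0, U]\<close>; it is minimised by the clamp of \<open>c / (2 a)\<close>,
  with quadratic growth. Suppose the gap between \<open>control_ham\<close> at \<open>u\<^sup>*\<close> and at this minimiser
  were at least \<open>\<delta> > 0\<close> on a set of positive measure. Switching \<open>u\<^sup>*\<close> to the minimiser on a
  subset \<open>A\<close> of small measure \<open>\<mu>\<close> gives an admissible control whose state \<open>y\<close> exists by Picard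
  iteration and satisfies \<open>\<parallel>y - x\<parallel> = O(\<mu>)\<close>. Since the dynamics are quadratic, the Hamiltonian
  expands exactly around \<open>x\<close>, and integrating by parts against the costate turns
  \<open>J(y, u) - J(x, u\<^sup>*)\<close> into the integral of the control gap plus terms linear and quadratic in
  \<open>y - x\<close>. This is at most \<open>-\<delta> \<mu> + O(\<mu>\<^sup>2) < 0\<close>, contradicting optimality. Hence the gap
  vanishes almost everywhere, which is the claimed formula.\<close>

section \<open>Coordinates and the quadratic structure of the dynamics\<close>

lemma finite_coords [simp]: "finite (coords m)"
  unfolding coords_def by auto

lemma coords_simps [simp]:
  "CE \<in> coords m" "CSs \<in> coords m" "CSi \<in> coords m" "CL \<in> coords m"
  "CMs j \<in> coords m \<longleftrightarrow> j \<in> {1..m}" "CMi j \<in> coords m \<longleftrightarrow> j \<in> {1..m}"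
  unfolding coords_def by auto

lemma sum_coords:
  "(\<Sum>c\<in>coords m. g c) =
     g CE + g CSs + g CSi + g CL + (\<Sum>j=1..m. g (CMs j)) + (\<Sum>j=1..m. g (CMi j))"
proof -
  have "coords m = {CE, CSs, CSi, CL} \<union> (CMs ` {1..m} \<union> CMi ` {1..m})"
    unfolding coords_def by auto
  then have "(\<Sum>c\<in>coords m. g c)
      = (\<Sum>c\<in>{CE, CSs, CSi, CL}. g c) + (\<Sum>c\<in>CMs ` {1..m} \<union> CMi ` {1..m}. g c)"
    by (simp only:) (rule sum.union_disjoint, auto)
  also have "(\<Sum>c\<in>CMs ` {1..m} \<union> CMi ` {1..m}. g c)
      = (\<Sum>j=1..m. g (CMs j)) + (\<Sum>j=1..m. g (CMi j))"
    by (subst sum.union_disjoint) (auto simp: sum.reindex inj_on_def)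
  finally show ?thesis by (simp add: add.assoc)
qed

definition controlled :: "nat \<Rightarrow> cidx set" where
  "controlled n = {Ua, Us, Uk} \<union> Uj ` {1..n}"

lemma finite_controlled [simp]: "finite (controlled n)"
  unfolding controlled_def by auto

lemma controlled_simps [simp]:
  "Ua \<in> controlled n" "Us \<in> controlled n" "Uk \<in> controlled n"
  "Uj j \<in> controlled n \<longleftrightarrow> j \<in> {1..n}"
  unfolding controlled_def by auto

lemma controlled_mono: "n \<le> n' \<Longrightarrow> controlled n \<subseteq> controlled n'"
  unfolding controlled_def by auto

lemma sum_controlled:
  "(\<Sum>k\<in>controlled n. g k) = g Ua + g Us + g Uk + (\<Sum>j=1..n. g (Uj j))"
  unfolding controlled_def
  by (subst sum.union_disjoint) (auto simp: sum.reindex inj_on_def add.assoc)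

definition l1_norm :: "'a set \<Rightarrow> ('a \<Rightarrow> real) \<Rightarrow> real" where
  "l1_norm I v = (\<Sum>c\<in>I. \<bar>v c\<bar>)"

lemma l1_norm_nonneg: "0 \<le> l1_norm I v"
  unfolding l1_norm_def by (simp add: sum_nonneg)

lemma abs_le_l1_norm: "finite I \<Longrightarrow> c \<in> I \<Longrightarrow> \<bar>v c\<bar> \<le> l1_norm I v"
  unfolding l1_norm_def by (rule member_le_sum) auto

lemma l1_norm_cong: "(\<And>c. c \<in> I \<Longrightarrow> v c = w c) \<Longrightarrow> l1_norm I v = l1_norm I w"
  unfolding l1_norm_def by (rule sum.cong) auto

lemma l1_norm_zero [simp]: "l1_norm I (\<lambda>c. 0) = 0"
  unfolding l1_norm_def by simp

lemma l1_norm_commute: "l1_norm I (\<lambda>c. a c - b c) = l1_norm I (\<lambda>c. b c - a c)"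
  unfolding l1_norm_def by (simp add: abs_minus_commute)

lemma l1_norm_triangle:
  "l1_norm I (\<lambda>c. a c - b c) \<le> l1_norm I (\<lambda>c. a c - e c) + l1_norm I (\<lambda>c. e c - b c)"
  unfolding l1_norm_def sum.distrib[symmetric] by (rule sum_mono) linarith

lemma l1_norm_le_card: "(\<And>c. c \<in> I \<Longrightarrow> \<bar>v c\<bar> \<le> B) \<Longrightarrow> l1_norm I v \<le> card I * B"
  unfolding l1_norm_def using sum_mono[of I "\<lambda>c. \<bar>v c\<bar>" "\<lambda>c. B"] by simp

definition coord_unit :: "coord \<Rightarrow> coord \<Rightarrow> real" where
  "coord_unit c0 c = (if c = c0 then 1 else 0)"

lemma l1_norm_coord_unit: "c \<in> I \<Longrightarrow> finite I \<Longrightarrow> l1_norm I (coord_unit c) = 1"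
  unfolding l1_norm_def coord_unit_def by (simp add: if_distrib[of abs] sum.delta' cong: if_cong)

text \<open>\<open>rhs_lin\<close> is the derivative of \<open>rhs\<close> with respect to the state and \<open>rhs_quad\<close> the exact
  remainder, which is quadratic because the state equations are.\<close>

fun rhs_lin :: "params \<Rightarrow> nat \<Rightarrow> (cidx \<Rightarrow> real) \<Rightarrow> (coord \<Rightarrow> real) \<Rightarrow> (coord \<Rightarrow> real) \<Rightarrow> coord \<Rightarrow> real"
where
  "rhs_lin p m u x v CE = (\<Sum>j=1..m. theta p j * v (CMi j))
       - omega_s p * (v CSs * x CE + x CSs * v CE) - mu_e p * v CE - u Ua * v CE"
| "rhs_lin p m u x v CSs = - omega_s p * beta_s p * (v CSs * x CE + x CSs * v CE)
       + alpha_s p * (v CSs + v CSi) * (1 - u Uk * (x CSs + x CSi) / kappa_s p)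
       - alpha_s p * (x CSs + x CSi) * (u Uk * (v CSs + v CSi) / kappa_s p)
       - mu_s p * v CSs - u Us * v CSs"
| "rhs_lin p m u x v CSi = omega_s p * beta_s p * (v CSs * x CE + x CSs * v CE)
       - (mu_s p + gamma_s p) * v CSi - u Us * v CSi"
| "rhs_lin p m u x v CL = nu_s p * v CSi
       - (\<Sum>j=1..m. omega p j * (v (CMs j) * x CL + x (CMs j) * v CL)) - mu_l p * v CL - u Ua * v CL"
| "rhs_lin p m u x v (CMs j) = - omega p j * beta p j * (v CL * x (CMs j) + x CL * v (CMs j))
       - mu p j * v (CMs j)"
| "rhs_lin p m u x v (CMi j) = omega p j * beta p j * (v CL * x (CMs j) + x CL * v (CMs j))
       - (mu p j + gamma p j) * v (CMi j) - u (Uj j) * v (CMi j)"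

fun rhs_quad :: "params \<Rightarrow> nat \<Rightarrow> (cidx \<Rightarrow> real) \<Rightarrow> (coord \<Rightarrow> real) \<Rightarrow> coord \<Rightarrow> real" where
  "rhs_quad p m u v CE = - omega_s p * v CSs * v CE"
| "rhs_quad p m u v CSs = - omega_s p * beta_s p * v CSs * v CE
       - alpha_s p * u Uk * (v CSs + v CSi)\<^sup>2 / kappa_s p"
| "rhs_quad p m u v CSi = omega_s p * beta_s p * v CSs * v CE"
| "rhs_quad p m u v CL = - (\<Sum>j=1..m. omega p j * v (CMs j) * v CL)"
| "rhs_quad p m u v (CMs j) = - omega p j * beta p j * v CL * v (CMs j)"
| "rhs_quad p m u v (CMi j) = omega p j * beta p j * v CL * v (CMs j)"

lemma rhs_add_expand:
  "rhs p m u (\<lambda>c. x c + v c) c = rhs p m u x c + rhs_lin p m u x v c + rhs_quad p m u v c"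
  by (cases c) (simp_all add: algebra_simps sum.distrib sum_subtractf power2_eq_square
      diff_divide_distrib add_divide_distrib)

lemma rhs_lin_scale: "rhs_lin p m u x (\<lambda>c. s * v c) c = s * rhs_lin p m u x v c"
  by (cases c) (simp_all add: algebra_simps sum_distrib_left divide_inverse)

lemma rhs_lin_add: "rhs_lin p m u x (\<lambda>c. v c + w c) c = rhs_lin p m u x v c + rhs_lin p m u x w c"
  by (cases c) (simp_all add: algebra_simps sum.distrib divide_inverse)

lemma rhs_lin_cong:
  "(\<And>c. c \<in> coords m \<Longrightarrow> v c = w c) \<Longrightarrow> c \<in> coords m \<Longrightarrow> rhs_lin p m u x v c = rhs_lin p m u x w c"
  by (cases c) (auto intro!: sum.cong)

lemma rhs_quad_scale: "rhs_quad p m u (\<lambda>c. s * v c) c = s\<^sup>2 * rhs_quad p m u v c"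
  by (cases c) (simp_all add: algebra_simps power2_eq_square sum_distrib_left)

definition ham_lin :: "params \<Rightarrow> nat \<Rightarrow> nat \<Rightarrow> (cidx \<Rightarrow> real) \<Rightarrow> (coord \<Rightarrow> real)
    \<Rightarrow> (coord \<Rightarrow> real) \<Rightarrow> (coord \<Rightarrow> real) \<Rightarrow> real" where
  "ham_lin p m mc u l x v = (\<Sum>j=1..mc. v (CMi j)) + (\<Sum>c\<in>coords m. l c * rhs_lin p m u x v c)"

definition ham_quad :: "params \<Rightarrow> nat \<Rightarrow> (cidx \<Rightarrow> real) \<Rightarrow> (coord \<Rightarrow> real) \<Rightarrow> (coord \<Rightarrow> real) \<Rightarrow> real"
where
  "ham_quad p m u l v = (\<Sum>c\<in>coords m. l c * rhs_quad p m u v c)"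

lemma hamiltonian_add_expand:
  "hamiltonian p m mc (\<lambda>c. x c + v c) u l
     = hamiltonian p m mc x u l + ham_lin p m mc u l x v + ham_quad p m u l v"
  unfolding hamiltonian_def running_cost_def ham_lin_def ham_quad_def
  by (simp only: rhs_add_expand) (simp add: sum.distrib algebra_simps)

lemma ham_lin_scale: "ham_lin p m mc u l x (\<lambda>c. s * v c) = s * ham_lin p m mc u l x v"
  unfolding ham_lin_def by (simp add: rhs_lin_scale sum_distrib_left algebra_simps)

lemma ham_lin_add:
  "ham_lin p m mc u l x (\<lambda>c. v c + w c) = ham_lin p m mc u l x v + ham_lin p m mc u l x w"
  unfolding ham_lin_def by (simp add: rhs_lin_add sum.distrib algebra_simps)

lemma ham_lin_sum:
  "finite F \<Longrightarrow> ham_lin p m mc u l x (\<lambda>c'. \<Sum>c\<in>F. f c c') = (\<Sum>c\<in>F. ham_lin p m mc u l x (f c))"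
proof (induction F rule: finite_induct)
  case empty
  then show ?case using ham_lin_scale[of p m mc u l x 0] by simp
next
  case (insert a F)
  then show ?case by (simp add: ham_lin_add)
qed

lemma ham_lin_cong:
  assumes "mc \<le> m" and "\<And>c. c \<in> coords m \<Longrightarrow> v c = w c"
  shows "ham_lin p m mc u l x v = ham_lin p m mc u l x w"
  unfolding ham_lin_def using assms
  by (intro arg_cong2[where f = "(+)"] sum.cong refl) (auto intro!: rhs_lin_cong)

lemma ham_lin_coord_expand:
  assumes "mc \<le> m"
  shows "ham_lin p m mc u l x v = (\<Sum>c\<in>coords m. v c * ham_lin p m mc u l x (coord_unit c))"
proof -
  have "ham_lin p m mc u l x v = ham_lin p m mc u l x (\<lambda>c'. \<Sum>c\<in>coords m. v c * coord_unit c c')"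
    by (rule ham_lin_cong[OF assms]) (simp add: coord_unit_def if_distrib[of "(*) _"] sum.delta' cong: if_cong)
  also have "\<dots> = (\<Sum>c\<in>coords m. v c * ham_lin p m mc u l x (coord_unit c))"
    by (simp add: ham_lin_sum ham_lin_scale)
  finally show ?thesis .
qed

lemma ham_quad_scale: "ham_quad p m u l (\<lambda>c. s * v c) = s\<^sup>2 * ham_quad p m u l v"
  unfolding ham_quad_def by (simp add: rhs_quad_scale sum_distrib_left algebra_simps)

lemma dH_dx_eq_ham_lin: "dH_dx p m mc c x u l = ham_lin p m mc u l x (coord_unit c)"
proof -
  define D Q where "D = ham_lin p m mc u l x (coord_unit c)" and "Q = ham_quad p m u l (coord_unit c)"
  have "x(c := z) = (\<lambda>c'. x c' + (z - x c) * coord_unit c c')" for z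
    by (auto simp: coord_unit_def)
  then have H: "hamiltonian p m mc (x(c := z)) u l
      = hamiltonian p m mc x u l + (z - x c) * D + (z - x c)\<^sup>2 * Q" for z
    by (simp add: hamiltonian_add_expand ham_lin_scale ham_quad_scale D_def Q_def)
  have "((\<lambda>z. hamiltonian p m mc x u l + (z - x c) * D + (z - x c)\<^sup>2 * Q)
      has_real_derivative (1 * D + 2 * (x c - x c) * 1 * Q)) (at (x c))"
    by (intro derivative_eq_intros) auto
  then show ?thesis
    unfolding dH_dx_def H D_def by (simp add: DERIV_imp_deriv)
qed

section \<open>The control part of the Hamiltonian\<close>

definition weight :: "params \<Rightarrow> cidx \<Rightarrow> real" where
  "weight p k = (case k of Ua \<Rightarrow> A_a p | Us \<Rightarrow> A_s p | Uk \<Rightarrow> A_k p | Uj j \<Rightarrow> A_j p j)"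

definition control_max :: "params \<Rightarrow> cidx \<Rightarrow> real" where
  "control_max p k = (case k of Ua \<Rightarrow> uAmax p | Us \<Rightarrow> uSmax p | Uk \<Rightarrow> uKmax p | Uj j \<Rightarrow> uMmax p j)"

definition switching :: "params \<Rightarrow> (coord \<Rightarrow> real) \<Rightarrow> (coord \<Rightarrow> real) \<Rightarrow> cidx \<Rightarrow> real" where
  "switching p x l k = (case k of
      Ua \<Rightarrow> l CE * x CE + l CL * x CL
    | Us \<Rightarrow> l CSs * x CSs + l CSi * x CSi
    | Uk \<Rightarrow> alpha_s p * l CSs * (x CSs + x CSi)\<^sup>2 / kappa_s p
    | Uj j \<Rightarrow> l (CMi j) * x (CMi j))"

definition control_ham :: "params \<Rightarrow> nat \<Rightarrow> nat \<Rightarrow> (coord \<Rightarrow> real) \<Rightarrow> (cidx \<Rightarrow> real)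
    \<Rightarrow> (coord \<Rightarrow> real) \<Rightarrow> real" where
  "control_ham p m mc x u l =
     (\<Sum>k\<in>controlled mc. weight p k * (u k)\<^sup>2) - (\<Sum>k\<in>controlled m. switching p x l k * u k)"

lemma hamiltonian_minus_control_ham:
  "hamiltonian p m mc x u l - control_ham p m mc x u l = hamiltonian p m mc x v l - control_ham p m mc x v l"
  unfolding hamiltonian_def running_cost_def control_ham_def sum_coords sum_controlled
    weight_def switching_def
  by (simp add: algebra_simps sum.distrib sum_subtractf divide_inverse power2_eq_square)

definition in_control_box :: "params \<Rightarrow> nat \<Rightarrow> (cidx \<Rightarrow> real) \<Rightarrow> bool" where
  "in_control_box p mc v \<longleftrightarrow>
     (\<forall>k\<in>controlled mc. 0 \<le> v k \<and> v k \<le> control_max p k) \<and> (\<forall>k. k \<notin> controlled mc \<longrightarrow> v k = 0)"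

lemma admissible_iff:
  "admissible p mc T u \<longleftrightarrow>
     (\<forall>k. set_borel_measurable lborel {0..T} (\<lambda>t. u t k)) \<and> (\<forall>t\<in>{0..T}. in_control_box p mc (u t))"
proof -
  have "in_control_box p mc v \<longleftrightarrow>
      0 \<le> v Ua \<and> v Ua \<le> uAmax p \<and> 0 \<le> v Us \<and> v Us \<le> uSmax p \<and>
      0 \<le> v Uk \<and> v Uk \<le> uKmax p \<and>
      (\<forall>j\<in>{1..mc}. 0 \<le> v (Uj j) \<and> v (Uj j) \<le> uMmax p j) \<and>
      (\<forall>j. j \<notin> {1..mc} \<longrightarrow> v (Uj j) = 0)" for v
  proof -
    have "(\<forall>k. k \<notin> controlled mc \<longrightarrow> v k = 0) \<longleftrightarrow> (\<forall>j. j \<notin> {1..mc} \<longrightarrow> v (Uj j) = 0)"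
      by (metis cidx.exhaust controlled_simps)
    then show ?thesis
      unfolding in_control_box_def controlled_def control_max_def by auto
  qed
  then show ?thesis unfolding admissible_def by simp
qed

lemma pos_params_weight:
  "pos_params p m mc \<Longrightarrow> k \<in> controlled mc \<Longrightarrow> 0 < weight p k \<and> 0 < control_max p k"
  unfolding pos_params_def weight_def control_max_def controlled_def by auto

definition clamp :: "real \<Rightarrow> real \<Rightarrow> real" where
  "clamp U r = max 0 (min r U)"

lemma clamp_quadratic_growth:
  fixes a c U v :: real
  assumes "0 < a" "0 \<le> U" "0 \<le> v" "v \<le> U"
  defines "w \<equiv> clamp U (c / (2 * a))"
  shows "a * (v - w)\<^sup>2 \<le> (a * v\<^sup>2 - c * v) - (a * w\<^sup>2 - c * w)"
proof -
  have "(a * v\<^sup>2 - c * v) - (a * w\<^sup>2 - c * w) - a * (v - w)\<^sup>2 = (v - w) * (2 * a * w - c)"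
    by (simp add: algebra_simps power2_eq_square)
  moreover have "0 \<le> (v - w) * (2 * a * w - c)"
  proof (cases "c \<le> 0")
    case True
    then have "c / (2 * a) \<le> 0" using assms by (simp add: divide_nonpos_pos)
    then have "w = 0" using assms by (simp add: w_def clamp_def)
    then show ?thesis using True assms by (simp add: mult_nonneg_nonpos)
  next
    case False
    show ?thesis
    proof (cases "c / (2 * a) \<le> U")
      case True
      then show ?thesis using False assms by (simp add: w_def clamp_def)
    next
      case False
      then have "w = U" "2 * a * U < c"
        using assms by (auto simp: w_def clamp_def field_simps)
      then show ?thesis using assms by (intro mult_nonpos_nonpos) auto
    qed
  qed
  ultimately show ?thesis by linarith
qed

definition opt_control :: "params \<Rightarrow> nat \<Rightarrow> (coord \<Rightarrow> real) \<Rightarrow> (coord \<Rightarrow> real) \<Rightarrow> cidx \<Rightarrow> real" where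
  "opt_control p mc x l k =
     (if k \<in> controlled mc then clamp (control_max p k) (switching p x l k / (2 * weight p k)) else 0)"

lemma opt_control_in_box:
  "pos_params p m mc \<Longrightarrow> in_control_box p mc (opt_control p mc x l)"
  unfolding in_control_box_def opt_control_def clamp_def
  by (auto dest: pos_params_weight[of p m mc] simp: less_imp_le)

lemma control_ham_quadratic_growth:
  fixes x l :: "coord \<Rightarrow> real"
  assumes pos: "pos_params p m mc" and "mc \<le> m" and box: "in_control_box p mc v"
  defines "w \<equiv> opt_control p mc x l"
  shows "(\<Sum>k\<in>controlled mc. weight p k * (v k - w k)\<^sup>2) \<le> control_ham p m mc x v l - control_ham p m mc x w l"
proof -
  have outside: "v k = 0" "w k = 0" if "k \<notin> controlled mc" for k
    using box that by (auto simp: in_control_box_def w_def opt_control_def)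
  have "(\<Sum>k\<in>controlled m. switching p x l k * v k) - (\<Sum>k\<in>controlled m. switching p x l k * w k)
      = (\<Sum>k\<in>controlled mc. switching p x l k * v k - switching p x l k * w k)"
    unfolding sum_subtractf[symmetric]
    by (rule sum.mono_neutral_right) (use controlled_mono[OF \<open>mc \<le> m\<close>] outside in auto)
  then have gap: "control_ham p m mc x v l - control_ham p m mc x w l
      = (\<Sum>k\<in>controlled mc. (weight p k * (v k)\<^sup>2 - switching p x l k * v k)
                              - (weight p k * (w k)\<^sup>2 - switching p x l k * w k))"
    unfolding control_ham_def by (simp add: sum_subtractf)
  have "weight p k * (v k - w k)\<^sup>2 \<le> (weight p k * (v k)\<^sup>2 - switching p x l k * v k)
                              - (weight p k * (w k)\<^sup>2 - switching p x l k * w k)"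
    if "k \<in> controlled mc" for k
    using pos_params_weight[OF pos that] box that
    unfolding w_def opt_control_def in_control_box_def
    by (auto intro!: clamp_quadratic_growth)
  then show ?thesis unfolding gap by (rule sum_mono)
qed

lemma control_ham_gap_nonpos_imp_eq_opt_control:
  assumes pos: "pos_params p m mc" and "mc \<le> m" and box: "in_control_box p mc v"
    and "control_ham p m mc x v l - control_ham p m mc x (opt_control p mc x l) l \<le> 0"
  shows "v = opt_control p mc x l"
proof
  fix k
  let ?w = "opt_control p mc x l"
  have nonneg: "0 \<le> weight p k * (v k - ?w k)\<^sup>2" if "k \<in> controlled mc" for k
    using pos_params_weight[OF pos that] by simp
  have "(\<Sum>k\<in>controlled mc. weight p k * (v k - ?w k)\<^sup>2) \<le> 0"
    using control_ham_quadratic_growth[OF pos \<open>mc \<le> m\<close> box, of x l] assms(4) by linarith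
  then have "\<forall>k\<in>controlled mc. weight p k * (v k - ?w k)\<^sup>2 = 0"
    using sum_nonneg_eq_0_iff[of "controlled mc"] nonneg
    by (metis (no_types, lifting) finite_controlled order_antisym sum_nonneg)
  then show "v k = ?w k"
  proof (cases "k \<in> controlled mc")
    case True
    then show ?thesis
      using \<open>\<forall>k\<in>controlled mc. _ = 0\<close> pos_params_weight[OF pos True] by force
  next
    case False
    then show ?thesis using box by (simp add: in_control_box_def opt_control_def)
  qed
qed

definition bounded_data :: "nat \<Rightarrow> real \<Rightarrow> (coord \<Rightarrow> real) \<Rightarrow> (cidx \<Rightarrow> real) \<Rightarrow> (coord \<Rightarrow> real) \<Rightarrow> bool"
where
  "bounded_data m R x u l \<longleftrightarrow>
     (\<forall>c\<in>coords m. \<bar>x c\<bar> \<le> R \<and> \<bar>l c\<bar> \<le> R) \<and> (\<forall>k\<in>controlled m. \<bar>u k\<bar> \<le> R)"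

lemma bounded_data_mono: "bounded_data m R x u l \<Longrightarrow> R \<le> R' \<Longrightarrow> bounded_data m R' x u l"
  unfolding bounded_data_def by force

definition locally_bounded :: "nat \<Rightarrow> real
    \<Rightarrow> ((coord \<Rightarrow> real) \<Rightarrow> (cidx \<Rightarrow> real) \<Rightarrow> (coord \<Rightarrow> real) \<Rightarrow> real) \<Rightarrow> bool"
where
  "locally_bounded m R g \<longleftrightarrow> (\<exists>K. \<forall>x u l. bounded_data m R x u l \<longrightarrow> \<bar>g x u l\<bar> \<le> K)"

definition locally_dominated :: "nat \<Rightarrow> real \<Rightarrow> ((coord \<Rightarrow> real) \<Rightarrow> real)
    \<Rightarrow> ((coord \<Rightarrow> real) \<Rightarrow> (cidx \<Rightarrow> real) \<Rightarrow> (coord \<Rightarrow> real) \<Rightarrow> (coord \<Rightarrow> real) \<Rightarrow> real) \<Rightarrow> bool"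
where
  "locally_dominated m R w F \<longleftrightarrow> (\<exists>K. \<forall>x u l v. bounded_data m R x u l \<longrightarrow> \<bar>F x u l v\<bar> \<le> K * w v)"

lemma locally_bounded_const: "locally_bounded m R (\<lambda>x u l. k)"
  unfolding locally_bounded_def by auto

lemma locally_bounded_state: "c \<in> coords m \<Longrightarrow> locally_bounded m R (\<lambda>x u l. x c)"
  and locally_bounded_costate: "c \<in> coords m \<Longrightarrow> locally_bounded m R (\<lambda>x u l. l c)"
  and locally_bounded_control: "k \<in> controlled m \<Longrightarrow> locally_bounded m R (\<lambda>x u l. u k)"
  unfolding locally_bounded_def bounded_data_def by (auto intro!: exI[of _ R])

lemma locally_bounded_add:
  assumes "locally_bounded m R f" "locally_bounded m R g"
  shows "locally_bounded m R (\<lambda>x u l. f x u l + g x u l)"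
proof -
  obtain K1 K2 where "\<forall>x u l. bounded_data m R x u l \<longrightarrow> \<bar>f x u l\<bar> \<le> K1"
    "\<forall>x u l. bounded_data m R x u l \<longrightarrow> \<bar>g x u l\<bar> \<le> K2"
    using assms unfolding locally_bounded_def by blast
  then show ?thesis
    unfolding locally_bounded_def by (intro exI[of _ "K1 + K2"]) (smt (verit))
qed

lemma locally_bounded_minus: "locally_bounded m R f \<Longrightarrow> locally_bounded m R (\<lambda>x u l. - f x u l)"
  unfolding locally_bounded_def by auto

lemma locally_bounded_diff:
  "locally_bounded m R f \<Longrightarrow> locally_bounded m R g \<Longrightarrow> locally_bounded m R (\<lambda>x u l. f x u l - g x u l)"
  using locally_bounded_add[of m R f "\<lambda>x u l. - g x u l"] locally_bounded_minus[of m R g] by simp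

lemma locally_bounded_abs: "locally_bounded m R f \<Longrightarrow> locally_bounded m R (\<lambda>x u l. \<bar>f x u l\<bar>)"
  unfolding locally_bounded_def by auto

lemma locally_bounded_mult:
  assumes "locally_bounded m R f" "locally_bounded m R g"
  shows "locally_bounded m R (\<lambda>x u l. f x u l * g x u l)"
proof -
  obtain K1 K2 where K: "\<forall>x u l. bounded_data m R x u l \<longrightarrow> \<bar>f x u l\<bar> \<le> K1"
    "\<forall>x u l. bounded_data m R x u l \<longrightarrow> \<bar>g x u l\<bar> \<le> K2"
    using assms unfolding locally_bounded_def by blast
  have "\<bar>f x u l * g x u l\<bar> \<le> K1 * K2" if "bounded_data m R x u l" for x u l
    unfolding abs_mult using K that by (intro mult_mono) (auto intro: order_trans[OF abs_ge_zero])
  then show ?thesis unfolding locally_bounded_def by blast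
qed

lemma locally_bounded_divide: "locally_bounded m R f \<Longrightarrow> locally_bounded m R (\<lambda>x u l. f x u l / k)"
  unfolding divide_inverse by (intro locally_bounded_mult locally_bounded_const)

lemma locally_bounded_power2: "locally_bounded m R f \<Longrightarrow> locally_bounded m R (\<lambda>x u l. (f x u l)\<^sup>2)"
  unfolding power2_eq_square by (intro locally_bounded_mult)

lemma locally_bounded_sum:
  "finite S \<Longrightarrow> (\<And>j. j \<in> S \<Longrightarrow> locally_bounded m R (f j))
    \<Longrightarrow> locally_bounded m R (\<lambda>x u l. \<Sum>j\<in>S. f j x u l)"
  by (induction S rule: finite_induct)
     (auto intro: locally_bounded_add locally_bounded_const[of m R 0, simplified])

lemma locally_dominated_increment: "c \<in> coords m \<Longrightarrow> locally_dominated m R (l1_norm (coords m)) (\<lambda>x u l v. v c)"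
  unfolding locally_dominated_def by (auto intro!: exI[of _ 1] abs_le_l1_norm)

lemma locally_dominated_add:
  assumes "locally_dominated m R w F" "locally_dominated m R w G"
  shows "locally_dominated m R w (\<lambda>x u l v. F x u l v + G x u l v)"
proof -
  obtain K1 K2 where "\<forall>x u l v. bounded_data m R x u l \<longrightarrow> \<bar>F x u l v\<bar> \<le> K1 * w v"
    "\<forall>x u l v. bounded_data m R x u l \<longrightarrow> \<bar>G x u l v\<bar> \<le> K2 * w v"
    using assms unfolding locally_dominated_def by blast
  then show ?thesis unfolding locally_dominated_def
    by (intro exI[of _ "K1 + K2"])
       (auto simp: distrib_right intro!: abs_triangle_ineq[THEN order_trans] add_mono)
qed

lemma locally_dominated_minus: "locally_dominated m R w F \<Longrightarrow> locally_dominated m R w (\<lambda>x u l v. - F x u l v)"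
  unfolding locally_dominated_def by auto

lemma locally_dominated_diff:
  "locally_dominated m R w F \<Longrightarrow> locally_dominated m R w G
    \<Longrightarrow> locally_dominated m R w (\<lambda>x u l v. F x u l v - G x u l v)"
  using locally_dominated_add[of m R w F "\<lambda>x u l v. - G x u l v"] locally_dominated_minus[of m R w G]
  by simp

lemma locally_dominated_abs: "locally_dominated m R w F \<Longrightarrow> locally_dominated m R w (\<lambda>x u l v. \<bar>F x u l v\<bar>)"
  unfolding locally_dominated_def by auto

lemma locally_dominated_sum:
  "finite S \<Longrightarrow> (\<And>j. j \<in> S \<Longrightarrow> locally_dominated m R w (F j))
    \<Longrightarrow> locally_dominated m R w (\<lambda>x u l v. \<Sum>j\<in>S. F j x u l v)"
proof (induction S rule: finite_induct)
  case empty
  then show ?case unfolding locally_dominated_def by (auto intro!: exI[of _ 0])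
next
  case (insert a S)
  then show ?case by (simp add: locally_dominated_add)
qed

lemma locally_dominated_mult_increment:
  assumes "locally_dominated m R w F" "c \<in> coords m"
  shows "locally_dominated m R (\<lambda>v. w v * l1_norm (coords m) v) (\<lambda>x u l v. F x u l v * v c)"
proof -
  obtain K where K: "\<forall>x u l v. bounded_data m R x u l \<longrightarrow> \<bar>F x u l v\<bar> \<le> K * w v"
    using assms unfolding locally_dominated_def by blast
  have "\<bar>F x u l v * v c\<bar> \<le> (K * w v) * l1_norm (coords m) v" if "bounded_data m R x u l" for x u l v
  proof -
    have "\<bar>F x u l v\<bar> \<le> K * w v" using K that by blast
    then show ?thesis
      unfolding abs_mult using abs_le_l1_norm[OF finite_coords assms(2)]
      by (intro mult_mono) (auto intro: order_trans[OF abs_ge_zero])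
  qed
  then show ?thesis unfolding locally_dominated_def
    by (intro exI[of _ K]) (simp add: algebra_simps)
qed

lemma locally_dominated_mult_left:
  assumes "locally_bounded m R g" "locally_dominated m R w F"
  shows "locally_dominated m R w (\<lambda>x u l v. g x u l * F x u l v)"
proof -
  obtain K1 K2 where K: "\<forall>x u l. bounded_data m R x u l \<longrightarrow> \<bar>g x u l\<bar> \<le> K1"
    "\<forall>x u l v. bounded_data m R x u l \<longrightarrow> \<bar>F x u l v\<bar> \<le> K2 * w v"
    using assms unfolding locally_bounded_def locally_dominated_def by blast
  have "\<bar>g x u l * F x u l v\<bar> \<le> K1 * (K2 * w v)" if "bounded_data m R x u l" for x u l v
    unfolding abs_mult using K that by (intro mult_mono) (auto intro: order_trans[OF abs_ge_zero])
  then show ?thesis unfolding locally_dominated_def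
    by (intro exI[of _ "K1 * K2"]) (simp add: algebra_simps)
qed

lemma locally_dominated_mult_right:
  "locally_dominated m R w F \<Longrightarrow> locally_bounded m R g
    \<Longrightarrow> locally_dominated m R w (\<lambda>x u l v. F x u l v * g x u l)"
  using locally_dominated_mult_left[of m R g w F] by (simp add: mult.commute)

lemma locally_dominated_divide:
  "locally_dominated m R w F \<Longrightarrow> locally_dominated m R w (\<lambda>x u l v. F x u l v / k)"
  unfolding divide_inverse by (intro locally_dominated_mult_right locally_bounded_const)

lemma locally_dominated_power2:
  assumes "locally_dominated m R w F"
  shows "locally_dominated m R (\<lambda>v. w v * w v) (\<lambda>x u l v. (F x u l v)\<^sup>2)"
proof -
  obtain K where K: "\<forall>x u l v. bounded_data m R x u l \<longrightarrow> \<bar>F x u l v\<bar> \<le> K * w v"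
    using assms unfolding locally_dominated_def by blast
  have "\<bar>(F x u l v)\<^sup>2\<bar> \<le> (K * w v) * (K * w v)" if "bounded_data m R x u l" for x u l v
  proof -
    have "\<bar>F x u l v\<bar> \<le> K * w v" using K that by blast
    then show ?thesis
      unfolding power2_eq_square abs_mult by (intro mult_mono) (auto intro: order_trans[OF abs_ge_zero])
  qed
  then show ?thesis unfolding locally_dominated_def
    by (intro exI[of _ "K * K"]) (simp add: algebra_simps)
qed

lemma locally_dominated_component:
  assumes "locally_dominated m R w (\<lambda>x u l v. l1_norm (coords m) (F x u l v))" "c \<in> coords m"
  shows "locally_dominated m R w (\<lambda>x u l v. F x u l v c)"
  using assms abs_le_l1_norm[OF finite_coords assms(2)] unfolding locally_dominated_def
  by (meson abs_ge_self order_trans)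

lemmas locally_bounded_intros =
  locally_bounded_const locally_bounded_state locally_bounded_costate locally_bounded_control
  locally_bounded_add locally_bounded_minus locally_bounded_diff locally_bounded_abs
  locally_bounded_mult locally_bounded_divide locally_bounded_power2 locally_bounded_sum

lemmas locally_dominated_intros =
  locally_dominated_increment locally_dominated_add locally_dominated_minus locally_dominated_diff
  locally_dominated_abs locally_dominated_sum locally_dominated_mult_left locally_dominated_mult_right
  locally_dominated_divide locally_dominated_power2 locally_dominated_mult_increment

definition local_bound :: "nat \<Rightarrow> real
    \<Rightarrow> ((coord \<Rightarrow> real) \<Rightarrow> (cidx \<Rightarrow> real) \<Rightarrow> (coord \<Rightarrow> real) \<Rightarrow> real) \<Rightarrow> real"
where
  "local_bound m R g = \<bar>SOME K. \<forall>x u l. bounded_data m R x u l \<longrightarrow> \<bar>g x u l\<bar> \<le> K\<bar>"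

definition dominating_constant :: "nat \<Rightarrow> real \<Rightarrow> ((coord \<Rightarrow> real) \<Rightarrow> real)
    \<Rightarrow> ((coord \<Rightarrow> real) \<Rightarrow> (cidx \<Rightarrow> real) \<Rightarrow> (coord \<Rightarrow> real) \<Rightarrow> (coord \<Rightarrow> real) \<Rightarrow> real) \<Rightarrow> real"
where
  "dominating_constant m R w F = \<bar>SOME K. \<forall>x u l v. bounded_data m R x u l \<longrightarrow> \<bar>F x u l v\<bar> \<le> K * w v\<bar>"

lemma local_bound_nonneg: "0 \<le> local_bound m R g"
  and dominating_constant_nonneg: "0 \<le> dominating_constant m R w F"
  unfolding local_bound_def dominating_constant_def by simp_all

lemma abs_le_local_bound:
  assumes "locally_bounded m R g" "bounded_data m R x u l"
  shows "\<bar>g x u l\<bar> \<le> local_bound m R g"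
  using someI_ex[OF assms(1)[unfolded locally_bounded_def]] assms(2) unfolding local_bound_def
  by (meson abs_ge_self order_trans)

lemma abs_le_dominating_constant:
  assumes "locally_dominated m R w F" "\<And>v. 0 \<le> w v" "bounded_data m R x u l"
  shows "\<bar>F x u l v\<bar> \<le> dominating_constant m R w F * w v"
proof -
  let ?K = "SOME K. \<forall>x u l v. bounded_data m R x u l \<longrightarrow> \<bar>F x u l v\<bar> \<le> K * w v"
  have "\<bar>F x u l v\<bar> \<le> ?K * w v"
    using someI_ex[OF assms(1)[unfolded locally_dominated_def]] assms(3) by blast
  also have "\<dots> \<le> \<bar>?K\<bar> * w v" by (rule mult_right_mono) (auto simp: assms(2))
  finally show ?thesis unfolding dominating_constant_def .
qed

lemma locally_bounded_rhs: "c \<in> coords m \<Longrightarrow> locally_bounded m R (\<lambda>x u l. rhs p m u x c)"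
  by (cases c) (auto intro!: locally_bounded_intros)

lemma locally_bounded_rhs_norm: "locally_bounded m R (\<lambda>x u l. l1_norm (coords m) (rhs p m u x))"
  unfolding l1_norm_def by (auto intro!: locally_bounded_intros locally_bounded_rhs)

lemma locally_bounded_running_cost: "mc \<le> m \<Longrightarrow> locally_bounded m R (\<lambda>x u l. running_cost p mc x u)"
  unfolding running_cost_def by (auto intro!: locally_bounded_intros)

lemma locally_dominated_rhs_lin:
  "c \<in> coords m \<Longrightarrow> locally_dominated m R (l1_norm (coords m)) (\<lambda>x u l v. rhs_lin p m u x v c)"
  by (cases c) (auto intro!: locally_dominated_intros locally_bounded_intros)

lemma locally_dominated_rhs_lin_norm:
  "locally_dominated m R (l1_norm (coords m)) (\<lambda>x u l v. l1_norm (coords m) (rhs_lin p m u x v))"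
  unfolding l1_norm_def[of "coords m" "rhs_lin _ _ _ _ _"]
  by (auto intro!: locally_dominated_intros locally_dominated_rhs_lin)

lemma locally_dominated_rhs_quad_norm:
  "locally_dominated m R (\<lambda>v. l1_norm (coords m) v * l1_norm (coords m) v)
     (\<lambda>x u l v. l1_norm (coords m) (rhs_quad p m u v))"
proof -
  have "locally_dominated m R (\<lambda>v. l1_norm (coords m) v * l1_norm (coords m) v)
      (\<lambda>x u l v. rhs_quad p m u v c)" if "c \<in> coords m" for c
    using that by (cases c) (auto intro!: locally_dominated_intros locally_bounded_intros)
  then show ?thesis
    unfolding l1_norm_def[of "coords m" "rhs_quad _ _ _ _"] by (auto intro!: locally_dominated_intros)
qed

lemma locally_dominated_ham_lin:
  "mc \<le> m \<Longrightarrow> locally_dominated m R (l1_norm (coords m)) (\<lambda>x u l v. ham_lin p m mc u l x v)"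
  unfolding ham_lin_def
  by (auto intro!: locally_dominated_intros locally_bounded_intros locally_dominated_rhs_lin)

lemma locally_dominated_ham_quad:
  "locally_dominated m R (\<lambda>v. l1_norm (coords m) v * l1_norm (coords m) v) (\<lambda>x u l v. ham_quad p m u l v)"
  unfolding ham_quad_def
  by (auto intro!: locally_dominated_intros locally_bounded_intros
      locally_dominated_component[OF locally_dominated_rhs_quad_norm])

lemma set_integrable_bounded:
  fixes g :: "real \<Rightarrow> real"
  assumes "g \<in> borel_measurable lborel" "A \<in> sets lborel" "A \<subseteq> {a..b}"
    and "\<And>s. s \<in> A \<Longrightarrow> \<bar>g s\<bar> \<le> M"
  shows "set_integrable lborel A g"
proof -
  have "emeasure lborel A \<le> emeasure lborel {a..b}" using assms(2,3) by (intro emeasure_mono) auto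
  also have "\<dots> < \<infinity>" by (cases "a \<le> b") auto
  finally have "emeasure lborel A < \<infinity>" .
  then have "set_integrable lborel A (\<lambda>_. M)"
    unfolding set_integrable_def using integrable_real_indicator[OF assms(2)]
    by (intro integrable_scaleR_left) simp
  moreover have "set_borel_measurable lborel A g"
    unfolding set_borel_measurable_def using assms(1,2) by measurable
  moreover have "AE s in lborel. s \<in> A \<longrightarrow> norm (g s) \<le> norm M"
    using assms(4) by (intro AE_I2) (auto intro: order_trans[OF _ abs_ge_self])
  ultimately show ?thesis by (rule set_integrable_bound)
qed

lemma set_integrable_interval_bounded:
  fixes f g :: "real \<Rightarrow> real"
  assumes "g \<in> borel_measurable lborel" "\<And>s. s \<in> {a..b} \<Longrightarrow> f s = g s"
    and "\<And>s. s \<in> {a..b} \<Longrightarrow> \<bar>f s\<bar> \<le> M"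
  shows "set_integrable lborel {a..b} f"
proof -
  have "set_integrable lborel {a..b} g"
    by (rule set_integrable_bounded[OF assms(1)]) (use assms(2,3) in auto)
  then show ?thesis using set_integrable_cong[of lborel lborel "{a..b}" "{a..b}" f g] assms(2) by simp
qed

lemma set_integral_le_const:
  fixes g :: "real \<Rightarrow> real"
  assumes "set_integrable lborel A g" "A \<in> sets lborel" "emeasure lborel A \<noteq> \<infinity>"
    and "\<And>s. s \<in> A \<Longrightarrow> g s \<le> M"
  shows "(LINT s:A|lborel. g s) \<le> M * measure lborel A"
proof -
  have "set_integrable lborel A (\<lambda>_. M)"
    unfolding set_integrable_def using assms(2,3)
    by (intro integrable_scaleR_left integrable_real_indicator) (auto simp: less_top)
  then have "(LINT s:A|lborel. g s) \<le> (LINT s:A|lborel. M)"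
    using set_integral_mono[OF assms(1)] assms(4) by blast
  also have "\<dots> = M * measure lborel A" using set_integral_const[OF assms(2,3), of M] by simp
  finally show ?thesis .
qed

lemma set_integral_indicator_affine:
  assumes "A \<in> sets lborel" "A \<subseteq> {0..T}" "0 \<le> T"
  shows "set_integrable lborel {0..T} (\<lambda>s. indicator A s * a + b)"
    and "(LINT s:{0..T}|lborel. indicator A s * a + b) = measure lborel A * a + T * b"
proof -
  show "set_integrable lborel {0..T} (\<lambda>s. indicator A s * a + b)"
    using assms(1) by (intro set_integrable_bounded[where M = "\<bar>a\<bar> + \<bar>b\<bar>"]) (auto simp: indicator_def)
  have "emeasure lborel A \<le> emeasure lborel {0..T}" using assms by (intro emeasure_mono) auto
  also have "\<dots> < \<infinity>" using assms(3) by simp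
  finally have "emeasure lborel A < \<infinity>" .
  moreover have "(LINT s:{0..T}|lborel. indicator A s * a + b)
      = (\<integral>s. indicator A s * a + indicator {0..T} s * b \<partial>lborel)"
    unfolding set_lebesgue_integral_def using assms(2)
    by (intro Bochner_Integration.integral_cong) (auto simp: indicator_def)
  ultimately show "(LINT s:{0..T}|lborel. indicator A s * a + b) = measure lborel A * a + T * b"
    using assms by (simp add: Bochner_Integration.integral_add integrable_real_indicator mult.commute)
qed

lemma set_integral_power:
  "0 \<le> t \<Longrightarrow> (LINT s:{0..t}|lborel. s ^ k) = t ^ Suc k / Suc k"
  using integral_power[of 0 t k] unfolding set_lebesgue_integral_def by (simp add: mult.commute)

lemma set_integral_sum:
  fixes f :: "'i \<Rightarrow> real \<Rightarrow> real"
  assumes "finite I" "\<And>i. i \<in> I \<Longrightarrow> set_integrable lborel A (f i)"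
  shows "set_integrable lborel A (\<lambda>s. \<Sum>i\<in>I. f i s)"
    and "(LINT s:A|lborel. (\<Sum>i\<in>I. f i s)) = (\<Sum>i\<in>I. LINT s:A|lborel. f i s)"
proof -
  have "set_integrable lborel A (\<lambda>s. \<Sum>i\<in>I. f i s)
      \<and> (LINT s:A|lborel. (\<Sum>i\<in>I. f i s)) = (\<Sum>i\<in>I. LINT s:A|lborel. f i s)"
    using assms
  proof (induction I rule: finite_induct)
    case empty
    then show ?case by (simp add: set_integrable_def)
  next
    case (insert a I)
    then show ?case by (simp add: set_integral_add)
  qed
  then show "set_integrable lborel A (\<lambda>s. \<Sum>i\<in>I. f i s)"
    and "(LINT s:A|lborel. (\<Sum>i\<in>I. f i s)) = (\<Sum>i\<in>I. LINT s:A|lborel. f i s)" by auto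
qed

lemma borel_measurable_integral_from_0:
  fixes g :: "real \<Rightarrow> real"
  assumes [measurable]: "g \<in> borel_measurable lborel"
  shows "(\<lambda>t. LINT s:{0..t}|lborel. g s) \<in> borel_measurable lborel"
  unfolding set_lebesgue_integral_def
proof (rule lborel.borel_measurable_lebesgue_integral)
  have "(\<lambda>(t, s). indicator {0..t} s *\<^sub>R g s)
      = (\<lambda>z::real \<times> real. (if 0 \<le> snd z \<and> snd z \<le> fst z then 1 else 0) * g (snd z))"
    by (auto simp: indicator_def fun_eq_iff)
  also have "\<dots> \<in> borel_measurable (lborel \<Otimes>\<^sub>M lborel)" by measurable
  finally show "(\<lambda>(t, s). indicator {0..t} s *\<^sub>R g s) \<in> borel_measurable (lborel \<Otimes>\<^sub>M lborel)" .
qed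

lemma borel_measurable_integral_to_T:
  fixes g :: "real \<Rightarrow> real"
  assumes [measurable]: "g \<in> borel_measurable lborel"
  shows "(\<lambda>t. LINT s:{t..T}|lborel. g s) \<in> borel_measurable lborel"
  unfolding set_lebesgue_integral_def
proof (rule lborel.borel_measurable_lebesgue_integral)
  have "(\<lambda>(t, s). indicator {t..T} s *\<^sub>R g s)
      = (\<lambda>z::real \<times> real. (if fst z \<le> snd z \<and> snd z \<le> T then 1 else 0) * g (snd z))"
    by (auto simp: indicator_def fun_eq_iff)
  also have "\<dots> \<in> borel_measurable (lborel \<Otimes>\<^sub>M lborel)" by measurable
  finally show "(\<lambda>(t, s). indicator {t..T} s *\<^sub>R g s) \<in> borel_measurable (lborel \<Otimes>\<^sub>M lborel)" .
qed

lemma integrable_pair_lborel_bounded_square: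
  fixes f :: "real \<times> real \<Rightarrow> real"
  assumes "f \<in> borel_measurable (lborel \<Otimes>\<^sub>M lborel)" "\<And>z. \<bar>f z\<bar> \<le> M"
    and "\<And>z. z \<notin> {0..T} \<times> {0..T} \<Longrightarrow> f z = 0"
  shows "integrable (lborel \<Otimes>\<^sub>M lborel) f"
proof (rule Bochner_Integration.integrable_bound)
  have "emeasure (lborel \<Otimes>\<^sub>M lborel) ({0..T} \<times> {0..T})
      = emeasure lborel {0..T} * emeasure lborel {0..T::real}"
    by (rule lborel.emeasure_pair_measure_Times) auto
  also have "\<dots> < \<infinity>" by (cases "0 \<le> T") (auto simp: ennreal_mult_less_top)
  finally show "integrable (lborel \<Otimes>\<^sub>M lborel) (\<lambda>z. M *\<^sub>R indicator ({0..T} \<times> {0..T}) z :: real)"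
    by (intro integrable_scaleR_right integrable_real_indicator) auto
  show "AE z in lborel \<Otimes>\<^sub>M lborel. norm (f z) \<le> norm (M *\<^sub>R indicator ({0..T} \<times> {0..T}) z :: real)"
    using assms(2,3) order_trans[OF abs_ge_zero assms(2)] by (intro AE_I2) (auto simp: indicator_def)
qed (rule assms(1))

lemma set_integral_swap_triangle:
  fixes g h :: "real \<Rightarrow> real"
  assumes [measurable]: "g \<in> borel_measurable lborel" "h \<in> borel_measurable lborel"
    and bounds: "\<And>s. \<bar>g s\<bar> \<le> M" "\<And>s. \<bar>h s\<bar> \<le> M"
  shows "(LINT t:{0..T}|lborel. (LINT s:{t..T}|lborel. h s) * g t)
       = (LINT s:{0..T}|lborel. h s * (LINT t:{0..s}|lborel. g t))"
proof -
  define f where "f t s = indicator {0..T} t * indicator {t..T} s * (g t * h s)" for t s :: real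
  have "case_prod f = (\<lambda>z. (if 0 \<le> fst z \<and> fst z \<le> T then 1 else 0)
      * (if fst z \<le> snd z \<and> snd z \<le> T then 1 else 0) * (g (fst z) * h (snd z)))"
    by (auto simp: f_def fun_eq_iff indicator_def)
  also have "\<dots> \<in> borel_measurable (lborel \<Otimes>\<^sub>M lborel)" by measurable
  finally have "integrable (lborel \<Otimes>\<^sub>M lborel) (case_prod f)"
  proof (rule integrable_pair_lborel_bounded_square)
    have "\<bar>g t * h s\<bar> \<le> M * M" for t s
      unfolding abs_mult by (rule mult_mono) (auto simp: bounds order_trans[OF abs_ge_zero bounds(1)])
    then show "\<bar>case_prod f z\<bar> \<le> M * M" for z
      using order_trans[OF abs_ge_zero bounds(1)] by (cases z) (auto simp: f_def indicator_def)
    show "case_prod f z = 0" if "z \<notin> {0..T} \<times> {0..T}" for z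
      using that by (cases z) (auto simp: f_def indicator_def)
  qed
  then have "(\<integral>s. (\<integral>t. f t s \<partial>lborel) \<partial>lborel) = (\<integral>t. (\<integral>s. f t s \<partial>lborel) \<partial>lborel)"
    by (rule lborel_pair.Fubini_integral)
  moreover have "(\<integral>s. f t s \<partial>lborel) = indicator {0..T} t * ((LINT s:{t..T}|lborel. h s) * g t)" for t
  proof -
    have "(\<lambda>s. f t s) = (\<lambda>s. (indicator {0..T} t * g t) * (indicator {t..T} s * h s))"
      by (auto simp: f_def indicator_def fun_eq_iff)
    then show ?thesis unfolding set_lebesgue_integral_def by simp
  qed
  moreover have "(\<integral>t. f t s \<partial>lborel) = indicator {0..T} s * (h s * (LINT t:{0..s}|lborel. g t))" for s
  proof -
    have "(\<lambda>t. f t s) = (\<lambda>t. (indicator {0..T} s * h s) * (indicator {0..s} t * g t))"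
      by (auto simp: f_def indicator_def fun_eq_iff)
    then show ?thesis unfolding set_lebesgue_integral_def by simp
  qed
  ultimately show ?thesis unfolding set_lebesgue_integral_def by simp
qed

lemma l1_norm_set_integral_le:
  fixes f :: "'a \<Rightarrow> real \<Rightarrow> real"
  assumes "finite I" "\<And>c. c \<in> I \<Longrightarrow> set_integrable lborel A (f c)"
  shows "set_integrable lborel A (\<lambda>s. l1_norm I (\<lambda>c. f c s))"
    and "l1_norm I (\<lambda>c. LINT s:A|lborel. f c s) \<le> (LINT s:A|lborel. l1_norm I (\<lambda>c. f c s))"
proof -
  have abs_int: "set_integrable lborel A (\<lambda>s. \<bar>f c s\<bar>)" if "c \<in> I" for c
    using set_integrable_abs[OF assms(2)[OF that]] by simp
  show "set_integrable lborel A (\<lambda>s. l1_norm I (\<lambda>c. f c s))"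
    unfolding l1_norm_def by (rule set_integral_sum(1)[OF assms(1) abs_int])
  have "l1_norm I (\<lambda>c. LINT s:A|lborel. f c s) \<le> (\<Sum>c\<in>I. LINT s:A|lborel. \<bar>f c s\<bar>)"
    unfolding l1_norm_def
    by (rule sum_mono) (use set_integral_norm_bound[OF assms(2)] in auto)
  also have "\<dots> = (LINT s:A|lborel. l1_norm I (\<lambda>c. f c s))"
    unfolding l1_norm_def by (rule set_integral_sum(2)[OF assms(1) abs_int, symmetric])
  finally show "l1_norm I (\<lambda>c. LINT s:A|lborel. f c s) \<le> (LINT s:A|lborel. l1_norm I (\<lambda>c. f c s))" .
qed

lemma exp_partial_sums:
  fixes x :: real
  shows "(\<lambda>n. \<Sum>k<n. x ^ k / fact k) \<longlonglongrightarrow> exp x"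
    and "0 \<le> x \<Longrightarrow> (\<Sum>k<N. x ^ k / fact k) \<le> exp x"
proof -
  have sums: "(\<lambda>k. x ^ k / fact k) sums exp x"
    using exp_converges[of x] by (simp add: scaleR_conv_of_real divide_inverse mult.commute)
  then show "(\<lambda>n. \<Sum>k<n. x ^ k / fact k) \<longlonglongrightarrow> exp x" unfolding sums_def .
  show "0 \<le> x \<Longrightarrow> (\<Sum>k<N. x ^ k / fact k) \<le> exp x"
    using sum_le_suminf[OF sums_summable[OF sums], of "{..<N}"] sums_unique[OF sums] by auto
qed

section \<open>Volterra equations with a Lipschitz right-hand side\<close>

locale volterra_lipschitz =
  fixes I :: "'a set" and G :: "real \<Rightarrow> ('a \<Rightarrow> real) \<Rightarrow> 'a \<Rightarrow> real" and T K B a :: real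
  assumes finite_I: "finite I" and T_nonneg: "0 \<le> T" and K_nonneg: "0 \<le> K"
    and G_measurable: "\<And>v c. (\<And>c'. c' \<in> I \<Longrightarrow> (\<lambda>s. v s c') \<in> borel_measurable lborel) \<Longrightarrow> c \<in> I
        \<Longrightarrow> (\<lambda>s. G s (v s) c) \<in> borel_measurable lborel"
    and G_bounded: "\<And>s v c. c \<in> I \<Longrightarrow> \<bar>G s v c\<bar> \<le> B"
    and G_lipschitz: "\<And>s v w. l1_norm I (\<lambda>c. G s v c - G s w c) \<le> K * l1_norm I (\<lambda>c. v c - w c)"
    and first_step: "\<And>t. t \<in> {0..T} \<Longrightarrow> l1_norm I (\<lambda>c. LINT s:{0..t}|lborel. G s (\<lambda>_. 0) c) \<le> a"
begin

lemma a_nonneg: "0 \<le> a"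
  using first_step[of 0] T_nonneg l1_norm_nonneg by (meson atLeastAtMost_iff order.refl order_trans)

lemma G_integrable:
  assumes "\<And>c'. c' \<in> I \<Longrightarrow> (\<lambda>s. v s c') \<in> borel_measurable lborel" "c \<in> I"
  shows "set_integrable lborel {0..t} (\<lambda>s. G s (v s) c)"
  by (rule set_integrable_bounded[where A = "{0..t}" and a = 0 and b = t and M = B],
      rule G_measurable[OF assms])
    (use G_bounded assms(2) in auto)

lemma integral_lipschitz:
  assumes "\<And>c. c \<in> I \<Longrightarrow> (\<lambda>s. v s c) \<in> borel_measurable lborel"
    and "\<And>c. c \<in> I \<Longrightarrow> (\<lambda>s. w s c) \<in> borel_measurable lborel"
    and "set_integrable lborel {0..t} (\<lambda>s. l1_norm I (\<lambda>c. v s c - w s c))"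
  shows "l1_norm I (\<lambda>c. (LINT s:{0..t}|lborel. G s (v s) c) - (LINT s:{0..t}|lborel. G s (w s) c))
      \<le> K * (LINT s:{0..t}|lborel. l1_norm I (\<lambda>c. v s c - w s c))"
proof -
  have diff_int: "set_integrable lborel {0..t} (\<lambda>s. G s (v s) c - G s (w s) c)" if "c \<in> I" for c
    using G_integrable[OF assms(1) that] G_integrable[OF assms(2) that] by auto
  have "l1_norm I (\<lambda>c. (LINT s:{0..t}|lborel. G s (v s) c) - (LINT s:{0..t}|lborel. G s (w s) c))
      = l1_norm I (\<lambda>c. LINT s:{0..t}|lborel. G s (v s) c - G s (w s) c)"
    by (rule l1_norm_cong) (use G_integrable[OF assms(1)] G_integrable[OF assms(2)] in auto)
  also have "\<dots> \<le> (LINT s:{0..t}|lborel. l1_norm I (\<lambda>c. G s (v s) c - G s (w s) c))"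
    by (rule l1_norm_set_integral_le(2)[OF finite_I diff_int])
  also have "\<dots> \<le> (LINT s:{0..t}|lborel. K * l1_norm I (\<lambda>c. v s c - w s c))"
    by (rule set_integral_mono[OF l1_norm_set_integral_le(1)[OF finite_I diff_int]])
       (use assms(3) G_lipschitz in auto)
  finally show ?thesis by simp
qed

fun iterate :: "nat \<Rightarrow> real \<Rightarrow> 'a \<Rightarrow> real" where
  "iterate 0 t c = 0"
| "iterate (Suc n) t c = (if c \<in> I then LINT s:{0..t}|lborel. G s (iterate n s) c else 0)"

lemma iterate_measurable: "(\<lambda>s. iterate n s c) \<in> borel_measurable lborel"
proof (induction n arbitrary: c)
  case (Suc n)
  have "(\<lambda>t. LINT s:{0..t}|lborel. G s (iterate n s) c) \<in> borel_measurable lborel" if "c \<in> I"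
    by (rule borel_measurable_integral_from_0[OF G_measurable[OF Suc.IH that]])
  then show ?case by (cases "c \<in> I") simp_all
qed simp

lemma iterate_dist_measurable:
  "(\<lambda>s. l1_norm I (\<lambda>c. f s c - iterate n s c)) \<in> borel_measurable lborel"
  if "\<And>c. c \<in> I \<Longrightarrow> (\<lambda>s. f s c) \<in> borel_measurable lborel"
  unfolding l1_norm_def using that iterate_measurable by measurable

definition series_tail :: "nat \<Rightarrow> real" where
  "series_tail n = a * (exp (K * T) - (\<Sum>k<n. (K * T) ^ k / fact k))"

lemma iterate_step:
  "t \<in> {0..T} \<Longrightarrow> l1_norm I (\<lambda>c. iterate (Suc n) t c - iterate n t c) \<le> a * (K * t) ^ n / fact n"
proof (induction n arbitrary: t)
  case 0
  have "iterate 0 s = (\<lambda>_. 0)" for s by auto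
  then show ?case using first_step[OF 0] by (simp cong: l1_norm_cong)
next
  case (Suc n)
  have t: "0 \<le> t" "t \<le> T" using Suc.prems by auto
  have bound: "\<bar>l1_norm I (\<lambda>c. iterate (Suc n) s c - iterate n s c)\<bar> \<le> a * (K * T) ^ n / fact n"
    if "s \<in> {0..t}" for s
  proof -
    have "l1_norm I (\<lambda>c. iterate (Suc n) s c - iterate n s c) \<le> a * (K * s) ^ n / fact n"
      using Suc.IH that t by auto
    also have "\<dots> \<le> a * (K * T) ^ n / fact n"
      using that t K_nonneg a_nonneg by (auto intro!: divide_right_mono mult_left_mono power_mono)
    finally show ?thesis by (simp add: l1_norm_nonneg)
  qed
  have dist_int: "set_integrable lborel {0..t} (\<lambda>s. l1_norm I (\<lambda>c. iterate (Suc n) s c - iterate n s c))"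
    by (rule set_integrable_bounded[OF iterate_dist_measurable[OF iterate_measurable] _ order.refl bound])
      simp
  have pow_int: "set_integrable lborel {0..t} (\<lambda>s. a * (K * s) ^ n / fact n)"
    by (rule set_integrable_bounded[where M = "a * (K * T) ^ n / fact n"])
       (use t K_nonneg a_nonneg in \<open>auto intro!: divide_right_mono mult_left_mono power_mono\<close>)
  have "l1_norm I (\<lambda>c. iterate (Suc (Suc n)) t c - iterate (Suc n) t c)
      = l1_norm I (\<lambda>c. (LINT s:{0..t}|lborel. G s (iterate (Suc n) s) c)
                      - (LINT s:{0..t}|lborel. G s (iterate n s) c))"
    by (rule l1_norm_cong) simp
  also have "\<dots> \<le> K * (LINT s:{0..t}|lborel. l1_norm I (\<lambda>c. iterate (Suc n) s c - iterate n s c))"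
    by (rule integral_lipschitz[OF iterate_measurable iterate_measurable dist_int])
  also have "\<dots> \<le> K * (LINT s:{0..t}|lborel. a * (K * s) ^ n / fact n)"
    by (intro mult_left_mono K_nonneg set_integral_mono[OF dist_int pow_int]) (use Suc.IH t in auto)
  also have "(LINT s:{0..t}|lborel. a * (K * s) ^ n / fact n)
      = a * K ^ n / fact n * (LINT s:{0..t}|lborel. s ^ n)"
    by (simp add: power_mult_distrib)
  also have "\<dots> = a * K ^ n / fact n * (t ^ Suc n / Suc n)"
    using set_integral_power[OF t(1), of n] by simp
  also have "K * (a * K ^ n / fact n * (t ^ Suc n / Suc n)) = a * (K * t) ^ Suc n / fact (Suc n)"
    by (simp add: power_mult_distrib field_simps)
  finally show ?case .
qed

lemma iterate_dist:
  assumes "t \<in> {0..T}" "n \<le> N"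
  shows "l1_norm I (\<lambda>c. iterate N t c - iterate n t c) \<le> series_tail n"
proof -
  have "l1_norm I (\<lambda>c. iterate N t c - iterate n t c) \<le> a * (\<Sum>k\<in>{n..<N}. (K * T) ^ k / fact k)"
    using assms(2)
  proof (induction N rule: dec_induct)
    case (step N)
    have "a * (K * t) ^ N / fact N \<le> a * ((K * T) ^ N / fact N)"
      using assms(1) K_nonneg a_nonneg by (auto intro!: divide_right_mono mult_left_mono power_mono)
    then show ?case
      using l1_norm_triangle[of I "iterate (Suc N) t" "iterate n t" "iterate N t"]
        iterate_step[OF assms(1), of N] step.IH step.hyps
      by (simp add: algebra_simps)
  qed simp
  also have "\<dots> \<le> series_tail n"
  proof -
    have "(\<Sum>k<N. (K * T) ^ k / fact k)
        = (\<Sum>k<n. (K * T) ^ k / fact k) + (\<Sum>k\<in>{n..<N}. (K * T) ^ k / fact k)"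
      using assms(2) by (metis atLeast0LessThan sum.atLeastLessThan_concat zero_le)
    moreover have "(\<Sum>k<N. (K * T) ^ k / fact k) \<le> exp (K * T)"
      using exp_partial_sums(2) K_nonneg T_nonneg by simp
    ultimately show ?thesis
      unfolding series_tail_def using a_nonneg by (intro mult_left_mono) auto
  qed
  finally show ?thesis .
qed

lemma series_tail_tendsto_0: "series_tail \<longlonglongrightarrow> 0"
proof -
  have "(\<lambda>n. a * (exp (K * T) - (\<Sum>k<n. (K * T) ^ k / fact k))) \<longlonglongrightarrow> a * (exp (K * T) - exp (K * T))"
    by (intro tendsto_intros exp_partial_sums(1))
  then show ?thesis unfolding series_tail_def[abs_def] by simp
qed

definition solution :: "real \<Rightarrow> 'a \<Rightarrow> real" where
  "solution t c = lim (\<lambda>n. iterate n t c)"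

lemma iterate_tendsto:
  assumes "t \<in> {0..T}"
  shows "(\<lambda>n. iterate n t c) \<longlonglongrightarrow> solution t c"
proof (cases "c \<in> I")
  case False
  then have "iterate n t c = 0" for n by (cases n) simp_all
  then show ?thesis by (simp add: solution_def)
next
  case True
  have "Cauchy (\<lambda>n. iterate n t c)"
  proof (rule CauchyI)
    fix e :: real assume "0 < e"
    then obtain M where M: "\<forall>n\<ge>M. \<bar>series_tail n\<bar> < e / 2"
      using series_tail_tendsto_0 unfolding LIMSEQ_def dist_real_def by (metis diff_zero half_gt_zero)
    have close: "\<bar>iterate n t c - iterate M t c\<bar> < e / 2" if "M \<le> n" for n
      using abs_le_l1_norm[OF finite_I True, of "\<lambda>c. iterate n t c - iterate M t c"]
        iterate_dist[OF assms that] M by fastforce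
    show "\<exists>M. \<forall>n\<ge>M. \<forall>n'\<ge>M. norm (iterate n t c - iterate n' t c) < e"
    proof (intro exI[of _ M] allI impI)
      fix n n' assume "M \<le> n" "M \<le> n'"
      then show "norm (iterate n t c - iterate n' t c) < e"
        using close[of n] close[of n'] unfolding real_norm_def by linarith
    qed
  qed
  then show ?thesis
    unfolding solution_def by (simp add: Cauchy_convergent_iff convergent_LIMSEQ_iff)
qed

lemma solution_outside: "c \<notin> I \<Longrightarrow> solution t c = 0"
proof -
  assume "c \<notin> I"
  then have "iterate n t c = 0" for n by (cases n) simp_all
  then show ?thesis by (simp add: solution_def)
qed

lemma solution_measurable: "(\<lambda>s. solution s c) \<in> borel_measurable lborel"
  unfolding solution_def by (rule borel_measurable_lim_metric) (rule iterate_measurable)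

lemma solution_dist: "t \<in> {0..T} \<Longrightarrow> l1_norm I (\<lambda>c. solution t c - iterate n t c) \<le> series_tail n"
proof (rule LIMSEQ_le_const2)
  assume t: "t \<in> {0..T}"
  show "(\<lambda>N. l1_norm I (\<lambda>c. iterate N t c - iterate n t c))
      \<longlonglongrightarrow> l1_norm I (\<lambda>c. solution t c - iterate n t c)"
    unfolding l1_norm_def by (intro tendsto_intros iterate_tendsto[OF t])
  show "\<exists>N. \<forall>N'\<ge>N. l1_norm I (\<lambda>c. iterate N' t c - iterate n t c) \<le> series_tail n"
    using iterate_dist[OF t] by blast
qed

lemma solution_bound: "t \<in> {0..T} \<Longrightarrow> l1_norm I (solution t) \<le> a * exp (K * T)"
  using solution_dist[of t 0] by (simp add: series_tail_def)

lemma solution_eq: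
  assumes t: "t \<in> {0..T}" and c: "c \<in> I"
  shows "solution t c = (LINT s:{0..t}|lborel. G s (solution s) c)"
proof -
  have dist: "\<bar>iterate (Suc n) t c - (LINT s:{0..t}|lborel. G s (solution s) c)\<bar>
      \<le> K * (series_tail n * t)" for n
  proof -
    have "emeasure lborel {0..t} \<noteq> \<infinity>" using t by simp
    have bound: "\<bar>l1_norm I (\<lambda>c. iterate n s c - solution s c)\<bar> \<le> series_tail n" if "s \<in> {0..t}" for s
      using solution_dist[of s n] that t by (simp add: l1_norm_nonneg l1_norm_commute)
    have "(\<lambda>s. l1_norm I (\<lambda>c. iterate n s c - solution s c)) \<in> borel_measurable lborel"
      using l1_norm_commute[of I] iterate_dist_measurable[where n = n, OF solution_measurable] by simp
    then have dist_int: "set_integrable lborel {0..t} (\<lambda>s. l1_norm I (\<lambda>c. iterate n s c - solution s c))"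
      by (rule set_integrable_bounded[OF _ _ order.refl bound]) simp
    have "\<bar>iterate (Suc n) t c - (LINT s:{0..t}|lborel. G s (solution s) c)\<bar>
        \<le> l1_norm I (\<lambda>c. (LINT s:{0..t}|lborel. G s (iterate n s) c)
                          - (LINT s:{0..t}|lborel. G s (solution s) c))"
      using abs_le_l1_norm[OF finite_I c] c by simp
    also have "\<dots> \<le> K * (LINT s:{0..t}|lborel. l1_norm I (\<lambda>c. iterate n s c - solution s c))"
      by (rule integral_lipschitz[OF iterate_measurable solution_measurable dist_int])
    also have "(LINT s:{0..t}|lborel. l1_norm I (\<lambda>c. iterate n s c - solution s c)) \<le> series_tail n * t"
    proof -
      have "(LINT s:{0..t}|lborel. l1_norm I (\<lambda>c. iterate n s c - solution s c))
          \<le> series_tail n * measure lborel {0..t}"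
        by (rule set_integral_le_const[OF dist_int])
           (use bound \<open>emeasure lborel {0..t} \<noteq> \<infinity>\<close> in \<open>auto dest: abs_le_D1\<close>)
      then show ?thesis using t by simp
    qed
    finally show ?thesis using K_nonneg by (simp add: mult_left_mono)
  qed
  have "(\<lambda>n. K * (series_tail n * t)) \<longlonglongrightarrow> 0"
    using tendsto_mult_left[OF tendsto_mult_right[OF series_tail_tendsto_0, of t], of K] by simp
  then have "(\<lambda>n. iterate (Suc n) t c - (LINT s:{0..t}|lborel. G s (solution s) c)) \<longlonglongrightarrow> 0"
    by (rule Lim_null_comparison[rotated]) (use dist in \<open>auto intro!: always_eventually\<close>)
  then have "(\<lambda>n. iterate (Suc n) t c) \<longlonglongrightarrow> (LINT s:{0..t}|lborel. G s (solution s) c)"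
    by (simp add: LIM_zero_iff)
  moreover have "(\<lambda>n. iterate (Suc n) t c) \<longlonglongrightarrow> solution t c"
    using iterate_tendsto[OF t] by (rule LIMSEQ_Suc)
  ultimately show ?thesis using LIMSEQ_unique by blast
qed

end

lemma interval_partition_cover:
  assumes "0 < T" "0 < N" "t \<in> {0..T}"
  shows "\<exists>k<N. t \<in> {real k * T / N .. (real k + 1) * T / N}"
proof -
  define r where "r = t * N / T"
  have r: "0 \<le> r" "r \<le> N" using assms by (auto simp: r_def field_simps)
  show ?thesis
  proof (cases "r < N")
    case True
    define k where "k = nat \<lfloor>r\<rfloor>"
    have "real k \<le> r" "r < real k + 1" using r unfolding k_def by linarith+
    moreover from this have "k < N" using True by linarith
    ultimately show ?thesis using assms by (intro exI[of _ k]) (auto simp: r_def field_simps)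
  next
    case False
    then have "t = T" using r assms by (simp add: r_def field_simps)
    then show ?thesis using assms by (intro exI[of _ "N - 1"]) (auto simp: of_nat_diff field_simps)
  qed
qed

lemma exists_small_positive_subset:
  fixes B :: "real set"
  assumes B: "B \<in> sets lborel" "B \<subseteq> {0..T}" "B \<notin> null_sets lborel" and "0 < T" "0 < \<eta>"
  obtains A where "A \<in> sets lborel" "A \<subseteq> B" "0 < measure lborel A" "measure lborel A \<le> \<eta>"
proof -
  obtain N :: nat where N: "T / \<eta> < N" using reals_Archimedean2 by blast
  then have "0 < N" using assms by (metis divide_pos_pos of_nat_0_less_iff order.strict_trans)
  define P where "P k = B \<inter> {real k * T / N .. (real k + 1) * T / N}" for k
  have P_sets: "P k \<in> sets lborel" for k using B(1) unfolding P_def by auto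
  have "B \<subseteq> (\<Union>k\<in>{..<N}. P k)"
    using interval_partition_cover[OF \<open>0 < T\<close> \<open>0 < N\<close>] B(2) unfolding P_def by blast
  then obtain k where k: "k < N" "P k \<notin> null_sets lborel"
    using B null_sets_subset[of "\<Union>k\<in>{..<N}. P k" lborel B] null_sets_UN'[of "{..<N}" P lborel]
    by (metis countable_finite finite_lessThan lessThan_iff)
  have "emeasure lborel (P k) \<le> emeasure lborel {real k * T / N .. (real k + 1) * T / N}"
    unfolding P_def by (intro emeasure_mono) auto
  also have "\<dots> = ennreal (T / N)"
    using \<open>0 < T\<close> \<open>0 < N\<close> by (simp add: field_simps)
  finally have le: "emeasure lborel (P k) \<le> ennreal (T / N)" .
  then have P_measure: "emeasure lborel (P k) = ennreal (measure lborel (P k))"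
    by (intro emeasure_eq_ennreal_measure) (auto simp: top_unique)
  have "measure lborel (P k) \<le> T / N"
    using le \<open>0 < T\<close> \<open>0 < N\<close> unfolding P_measure by (simp add: ennreal_le_iff)
  also have "T / N \<le> \<eta>" using N \<open>0 < \<eta>\<close> \<open>0 < N\<close> by (simp add: field_simps)
  finally have "measure lborel (P k) \<le> \<eta>" .
  moreover have "0 < measure lborel (P k)"
    using k(2) P_sets[of k] P_measure by (simp add: null_sets_def zero_less_measure_iff)
  ultimately show ?thesis using that[OF P_sets] unfolding P_def by blast
qed

lemma borel_measurable_rhs:
  assumes "\<And>c. c \<in> coords m \<Longrightarrow> (\<lambda>s. X s c) \<in> borel_measurable lborel"
    and "\<And>k. (\<lambda>s. U s k) \<in> borel_measurable lborel" and "c \<in> coords m"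
  shows "(\<lambda>s. rhs p m (U s) (X s) c) \<in> borel_measurable lborel"
proof -
  note X = assms(1)[unfolded measurable_lborel2] and U = assms(2)[unfolded measurable_lborel2]
  show ?thesis unfolding measurable_lborel2
    using assms(3) by (cases c) (auto intro!: borel_measurable_sum borel_measurable_add borel_measurable_diff
      borel_measurable_times borel_measurable_uminus borel_measurable_divide borel_measurable_const X U)
qed

lemma borel_measurable_running_cost:
  assumes "\<And>c. c \<in> coords m \<Longrightarrow> (\<lambda>s. X s c) \<in> borel_measurable lborel"
    and "\<And>k. (\<lambda>s. U s k) \<in> borel_measurable lborel" and "mc \<le> m"
  shows "(\<lambda>s. running_cost p mc (X s) (U s)) \<in> borel_measurable lborel"
proof -
  note X = assms(1)[unfolded measurable_lborel2] and U = assms(2)[unfolded measurable_lborel2]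
  show ?thesis unfolding running_cost_def measurable_lborel2
    using assms(3) by (auto intro!: borel_measurable_sum borel_measurable_add borel_measurable_power
      borel_measurable_times borel_measurable_const X U)
qed

lemma borel_measurable_switching:
  assumes "\<And>c. c \<in> coords m \<Longrightarrow> (\<lambda>s. X s c) \<in> borel_measurable lborel"
    and "\<And>c. c \<in> coords m \<Longrightarrow> (\<lambda>s. L s c) \<in> borel_measurable lborel" and "k \<in> controlled m"
  shows "(\<lambda>s. switching p (X s) (L s) k) \<in> borel_measurable lborel"
proof -
  note X = assms(1)[unfolded measurable_lborel2] and L = assms(2)[unfolded measurable_lborel2]
  show ?thesis unfolding switching_def measurable_lborel2
    using assms(3) by (cases k) (auto intro!: borel_measurable_add borel_measurable_power
      borel_measurable_times borel_measurable_divide borel_measurable_const X L)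
qed

lemma borel_measurable_opt_control:
  assumes "\<And>c. c \<in> coords m \<Longrightarrow> (\<lambda>s. X s c) \<in> borel_measurable lborel"
    and "\<And>c. c \<in> coords m \<Longrightarrow> (\<lambda>s. L s c) \<in> borel_measurable lborel" and "mc \<le> m"
  shows "(\<lambda>s. opt_control p mc (X s) (L s) k) \<in> borel_measurable lborel"
proof (cases "k \<in> controlled mc")
  case True
  then have "(\<lambda>s. switching p (X s) (L s) k) \<in> borel_measurable borel"
    using borel_measurable_switching[OF assms(1,2)] controlled_mono[OF assms(3)] by auto
  then show ?thesis
    unfolding opt_control_def clamp_def measurable_lborel2 using True
    by (auto intro!: borel_measurable_max borel_measurable_min borel_measurable_divide)
qed (simp add: opt_control_def)

lemma borel_measurable_control_ham:
  assumes "\<And>c. c \<in> coords m \<Longrightarrow> (\<lambda>s. X s c) \<in> borel_measurable lborel"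
    and "\<And>c. c \<in> coords m \<Longrightarrow> (\<lambda>s. L s c) \<in> borel_measurable lborel"
    and "\<And>k. (\<lambda>s. U s k) \<in> borel_measurable lborel" and "mc \<le> m"
  shows "(\<lambda>s. control_ham p m mc (X s) (U s) (L s)) \<in> borel_measurable lborel"
proof -
  have "(\<lambda>s. switching p (X s) (L s) k) \<in> borel_measurable borel" if "k \<in> controlled m" for k
    using borel_measurable_switching[OF assms(1,2) that] by simp
  then show ?thesis
    using assms(3)[unfolded measurable_lborel2] unfolding control_ham_def measurable_lborel2
    by (auto intro!: borel_measurable_sum borel_measurable_diff borel_measurable_times
        borel_measurable_power borel_measurable_const)
qed

definition cut_off :: "real \<Rightarrow> (real \<Rightarrow> 'a \<Rightarrow> real) \<Rightarrow> real \<Rightarrow> 'a \<Rightarrow> real" where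
  "cut_off T f t k = indicator {0..T} t * f t k"

lemma cut_off_inside [simp]: "t \<in> {0..T} \<Longrightarrow> cut_off T f t = f t"
  and cut_off_outside [simp]: "t \<notin> {0..T} \<Longrightarrow> cut_off T f t = (\<lambda>_. 0)"
  by (auto simp: cut_off_def fun_eq_iff)

lemma admissible_cut_off_measurable:
  "admissible p mc T u \<Longrightarrow> (\<lambda>t. cut_off T u t k) \<in> borel_measurable lborel"
  unfolding admissible_def set_borel_measurable_def cut_off_def by simp

lemma zero_in_control_box: "pos_params p m mc \<Longrightarrow> in_control_box p mc (\<lambda>_. 0)"
  unfolding in_control_box_def by (auto dest: pos_params_weight simp: less_imp_le)

lemma state_sol_initial: "state_sol p m T x0 u y \<Longrightarrow> c \<in> coords m \<Longrightarrow> y 0 c = x0 c"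
  unfolding state_sol_def by blast

lemma state_sol_eq:
  "state_sol p m T x0 u y \<Longrightarrow> c \<in> coords m \<Longrightarrow> t \<in> {0..T}
    \<Longrightarrow> y t c = x0 c + (LINT s:{0..t}|lborel. rhs p m (u s) (y s) c)"
  unfolding state_sol_def by force

definition state_rate :: "params \<Rightarrow> nat \<Rightarrow> real \<Rightarrow> (real \<Rightarrow> cidx \<Rightarrow> real) \<Rightarrow> (real \<Rightarrow> coord \<Rightarrow> real)
    \<Rightarrow> coord \<Rightarrow> real \<Rightarrow> real" where
  "state_rate p m T u y c s = indicator {0..T} s * rhs p m (u s) (y s) c"

lemma state_rate_integrable:
  "state_sol p m T x0 u y \<Longrightarrow> 0 \<le> T \<Longrightarrow> c \<in> coords m \<Longrightarrow> integrable lborel (state_rate p m T u y c)"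
  unfolding state_sol_def set_integrable_def state_rate_def[abs_def] by force

lemma state_sol_eq_state_rate:
  assumes "state_sol p m T x0 u y" "c \<in> coords m" "t \<in> {0..T}"
  shows "y t c = x0 c + (LINT s:{0..t}|lborel. state_rate p m T u y c s)"
  unfolding state_sol_eq[OF assms] using assms(3)
  by (auto intro!: set_lebesgue_integral_cong simp: state_rate_def)

lemma state_sol_cut_off_measurable:
  assumes "state_sol p m T x0 u y" "0 \<le> T" "c \<in> coords m"
  shows "(\<lambda>t. cut_off T y t c) \<in> borel_measurable lborel"
proof -
  have "cut_off T y t c = indicator {0..T} t * (x0 c + (LINT s:{0..t}|lborel. state_rate p m T u y c s))" for t
    using state_sol_eq_state_rate[OF assms(1,3)] by (cases "t \<in> {0..T}") (auto simp: cut_off_def)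
  moreover have "state_rate p m T u y c \<in> borel_measurable lborel"
    using state_rate_integrable[OF assms] by (rule borel_measurable_integrable)
  then have "(\<lambda>t. LINT s:{0..t}|lborel. state_rate p m T u y c s) \<in> borel_measurable lborel"
    by (rule borel_measurable_integral_from_0)
  ultimately show ?thesis
    by (simp del: measurable_lborel1 measurable_lborel2)
qed

lemma abs_set_integral_le_integral:
  fixes f :: "real \<Rightarrow> real"
  assumes "integrable lborel f" "A \<in> sets lborel"
  shows "\<bar>LINT s:A|lborel. f s\<bar> \<le> (\<integral>s. \<bar>f s\<bar> \<partial>lborel)"
  unfolding set_lebesgue_integral_def
proof (rule integral_abs_bound_integral)
  show "integrable lborel (\<lambda>s. indicator A s *\<^sub>R f s)"
    using assms by (intro integrable_mult_indicator) auto
qed (use assms in \<open>auto simp: indicator_def\<close>)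

definition state_bound :: "params \<Rightarrow> nat \<Rightarrow> real \<Rightarrow> (coord \<Rightarrow> real) \<Rightarrow> (real \<Rightarrow> cidx \<Rightarrow> real)
    \<Rightarrow> (real \<Rightarrow> coord \<Rightarrow> real) \<Rightarrow> real" where
  "state_bound p m T x0 u y = (\<Sum>c\<in>coords m. \<bar>x0 c\<bar> + (\<integral>s. \<bar>state_rate p m T u y c s\<bar> \<partial>lborel))"

lemma state_bound_nonneg: "0 \<le> state_bound p m T x0 u y"
  unfolding state_bound_def by (intro sum_nonneg add_nonneg_nonneg integral_nonneg_AE) auto

lemma abs_state_le_state_bound:
  assumes "state_sol p m T x0 u y" "c \<in> coords m" "t \<in> {0..T}"
  shows "\<bar>y t c\<bar> \<le> state_bound p m T x0 u y"
proof -
  have "0 \<le> T" using assms(3) by simp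
  have "\<bar>y t c\<bar> \<le> \<bar>x0 c\<bar> + (\<integral>s. \<bar>state_rate p m T u y c s\<bar> \<partial>lborel)"
    using state_sol_eq_state_rate[OF assms]
      abs_set_integral_le_integral[OF state_rate_integrable[OF assms(1) \<open>0 \<le> T\<close> assms(2)], of "{0..t}"]
    by simp
  also have "\<dots> \<le> state_bound p m T x0 u y"
    unfolding state_bound_def
    by (rule member_le_sum[where f = "\<lambda>c. \<bar>x0 c\<bar> + (\<integral>s. \<bar>state_rate p m T u y c s\<bar> \<partial>lborel)"])
       (use assms(2) in \<open>auto intro!: add_nonneg_nonneg integral_nonneg_AE\<close>)
  finally show ?thesis .
qed

locale optimal_control_problem =
  fixes p :: params and m mc :: nat and T :: real and x0 :: "coord \<Rightarrow> real"
    and ustar :: "real \<Rightarrow> cidx \<Rightarrow> real" and x lam :: "real \<Rightarrow> coord \<Rightarrow> real"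
  assumes mc_le_m: "mc \<le> m" and T_pos: "0 < T" and pos: "pos_params p m mc"
    and admissible: "admissible p mc T ustar" and state: "state_sol p m T x0 ustar x"
    and optimal: "\<And>u y. admissible p mc T u \<Longrightarrow> state_sol p m T x0 u y
        \<Longrightarrow> cost_J p mc T x ustar \<le> cost_J p mc T y u"
    and adjoint: "adjoint_sol p m mc T ustar x lam"
begin

lemma ustar_in_box: "t \<in> {0..T} \<Longrightarrow> in_control_box p mc (ustar t)"
  using admissible by (simp add: admissible_iff)

definition ham_gradient :: "coord \<Rightarrow> real \<Rightarrow> real" where
  "ham_gradient c s = indicator {0..T} s * ham_lin p m mc (ustar s) (lam s) (x s) (coord_unit c)"

lemma ham_gradient_integrable: "c \<in> coords m \<Longrightarrow> integrable lborel (ham_gradient c)"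
  using adjoint T_pos
  unfolding adjoint_sol_def set_integrable_def ham_gradient_def[abs_def] dH_dx_eq_ham_lin by force

lemma costate_eq:
  assumes "c \<in> coords m" "t \<in> {0..T}"
  shows "lam t c = (LINT s:{t..T}|lborel. ham_gradient c s)"
proof -
  let ?h = "\<lambda>s. ham_lin p m mc (ustar s) (lam s) (x s) (coord_unit c)"
  have "set_integrable lborel {t..T} ?h" "lam T c - lam t c = (LINT s:{t..T}|lborel. - ?h s)" "lam T c = 0"
    using adjoint assms unfolding adjoint_sol_def dH_dx_eq_ham_lin by auto
  then have "lam t c = (LINT s:{t..T}|lborel. ?h s)" by (simp add: set_integral_uminus)
  also have "\<dots> = (LINT s:{t..T}|lborel. ham_gradient c s)"
    using assms(2) by (intro set_lebesgue_integral_cong) (auto simp: ham_gradient_def)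
  finally show ?thesis .
qed

lemma costate_cut_off_measurable:
  assumes "c \<in> coords m"
  shows "(\<lambda>t. cut_off T lam t c) \<in> borel_measurable lborel"
proof -
  have "cut_off T lam t c = indicator {0..T} t * (LINT s:{t..T}|lborel. ham_gradient c s)" for t
    using costate_eq[OF assms] by (cases "t \<in> {0..T}") (auto simp: cut_off_def)
  moreover have "(\<lambda>t. LINT s:{t..T}|lborel. ham_gradient c s) \<in> borel_measurable lborel"
    using ham_gradient_integrable[OF assms]
    by (intro borel_measurable_integral_to_T borel_measurable_integrable)
  ultimately show ?thesis by (simp del: measurable_lborel1 measurable_lborel2)
qed

lemma state_cut_off_measurable: "c \<in> coords m \<Longrightarrow> (\<lambda>t. cut_off T x t c) \<in> borel_measurable lborel"
  using state_sol_cut_off_measurable[OF state] T_pos by simp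

definition costate_bound :: real where
  "costate_bound = (\<Sum>c\<in>coords m. \<integral>s. \<bar>ham_gradient c s\<bar> \<partial>lborel)"

lemma abs_costate_le: "c \<in> coords m \<Longrightarrow> t \<in> {0..T} \<Longrightarrow> \<bar>lam t c\<bar> \<le> costate_bound"
proof -
  assume c: "c \<in> coords m" and t: "t \<in> {0..T}"
  have "\<bar>lam t c\<bar> \<le> (\<integral>s. \<bar>ham_gradient c s\<bar> \<partial>lborel)"
    using costate_eq[OF c t] abs_set_integral_le_integral[OF ham_gradient_integrable[OF c]] by simp
  also have "\<dots> \<le> costate_bound"
    unfolding costate_bound_def
    by (rule member_le_sum[where f = "\<lambda>c. \<integral>s. \<bar>ham_gradient c s\<bar> \<partial>lborel"])
       (use c in \<open>auto intro!: integral_nonneg_AE\<close>)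
  finally show ?thesis .
qed

lemma costate_bound_nonneg: "0 \<le> costate_bound"
  unfolding costate_bound_def by (intro sum_nonneg integral_nonneg_AE) auto

definition control_bound :: real where
  "control_bound = (\<Sum>k\<in>controlled mc. control_max p k)"

lemma abs_control_le: "in_control_box p mc v \<Longrightarrow> \<bar>v k\<bar> \<le> control_bound"
proof (cases "k \<in> controlled mc")
  case True
  assume box: "in_control_box p mc v"
  have "\<bar>v k\<bar> \<le> control_max p k" using box True by (simp add: in_control_box_def)
  also have "\<dots> \<le> control_bound"
    unfolding control_bound_def using True pos_params_weight[OF pos]
    by (intro member_le_sum) (auto simp: less_imp_le)
  finally show ?thesis .
next
  case False
  assume box: "in_control_box p mc v"
  then show ?thesis
    using False pos_params_weight[OF pos] unfolding in_control_box_def control_bound_def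
    by (auto intro!: sum_nonneg simp: less_imp_le)
qed

lemma bounded_data_of_box:
  "in_control_box p mc v \<Longrightarrow> control_bound \<le> R \<Longrightarrow> (\<forall>c\<in>coords m. \<bar>z c\<bar> \<le> R \<and> \<bar>l c\<bar> \<le> R)
    \<Longrightarrow> bounded_data m R z v l"
  unfolding bounded_data_def using abs_control_le by (meson order_trans)

abbreviation state_radius :: real where
  "state_radius \<equiv> state_bound p m T x0 ustar x"

lemma abs_state_le: "c \<in> coords m \<Longrightarrow> t \<in> {0..T} \<Longrightarrow> \<bar>x t c\<bar> \<le> state_radius"
  by (rule abs_state_le_state_bound[OF state])

text \<open>Large enough to contain the data along the optimal pair and along any state within
  distance 1 of it.\<close>
definition data_radius :: real where
  "data_radius = state_radius + 1 + costate_bound + control_bound"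

lemma bounded_data_near_optimal:
  assumes "t \<in> {0..T}" "in_control_box p mc v" "\<And>c. c \<in> coords m \<Longrightarrow> \<bar>z c - x t c\<bar> \<le> 1"
  shows "bounded_data m data_radius z v (lam t)"
proof (rule bounded_data_of_box[OF assms(2)])
  have nonneg: "0 \<le> state_radius" "0 \<le> costate_bound" "0 \<le> control_bound"
    using state_bound_nonneg costate_bound_nonneg abs_control_le[OF assms(2), of Ua] by auto
  then show "control_bound \<le> data_radius" unfolding data_radius_def by simp
  show "\<forall>c\<in>coords m. \<bar>z c\<bar> \<le> data_radius \<and> \<bar>lam t c\<bar> \<le> data_radius"
    using abs_state_le[OF _ assms(1)] abs_costate_le[OF _ assms(1)] assms(3) nonneg
    unfolding data_radius_def by (smt (verit))
qed

lemma bounded_data_optimal: "t \<in> {0..T} \<Longrightarrow> in_control_box p mc v \<Longrightarrow> bounded_data m data_radius (x t) v (lam t)"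
  by (rule bounded_data_near_optimal) auto

definition "K_rhs = local_bound m data_radius (\<lambda>x u l. l1_norm (coords m) (rhs p m u x))"
definition "K_lin = dominating_constant m data_radius (l1_norm (coords m))
  (\<lambda>x u l v. l1_norm (coords m) (rhs_lin p m u x v))"
definition "K_quad = dominating_constant m data_radius (\<lambda>v. l1_norm (coords m) v * l1_norm (coords m) v)
  (\<lambda>x u l v. l1_norm (coords m) (rhs_quad p m u v))"
definition "K_ham_lin = dominating_constant m data_radius (l1_norm (coords m))
  (\<lambda>x u l v. ham_lin p m mc u l x v)"
definition "K_ham_quad = dominating_constant m data_radius (\<lambda>v. l1_norm (coords m) v * l1_norm (coords m) v)
  (\<lambda>x u l v. ham_quad p m u l v)"

lemma bound_constants_nonneg: "0 \<le> K_rhs" "0 \<le> K_lin" "0 \<le> K_quad" "0 \<le> K_ham_lin" "0 \<le> K_ham_quad"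
  unfolding K_rhs_def K_lin_def K_quad_def K_ham_lin_def K_ham_quad_def
  by (simp_all add: local_bound_nonneg dominating_constant_nonneg)

context
  fixes z l :: "coord \<Rightarrow> real" and v :: "cidx \<Rightarrow> real"
  assumes data: "bounded_data m data_radius z v l"
begin

lemma rhs_norm_le: "l1_norm (coords m) (rhs p m v z) \<le> K_rhs"
  using abs_le_local_bound[OF locally_bounded_rhs_norm[where p = p] data] unfolding K_rhs_def by simp

lemma rhs_lin_norm_le: "l1_norm (coords m) (rhs_lin p m v z e) \<le> K_lin * l1_norm (coords m) e"
  using abs_le_dominating_constant[OF locally_dominated_rhs_lin_norm[where p = p] _ data] unfolding K_lin_def
  by (simp add: l1_norm_nonneg)

lemma rhs_quad_norm_le:
  "l1_norm (coords m) (rhs_quad p m v e) \<le> K_quad * (l1_norm (coords m) e * l1_norm (coords m) e)"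
  using abs_le_dominating_constant[OF locally_dominated_rhs_quad_norm[where p = p] _ data] unfolding K_quad_def
  by (simp add: l1_norm_nonneg)

lemma abs_ham_lin_le: "\<bar>ham_lin p m mc v l z e\<bar> \<le> K_ham_lin * l1_norm (coords m) e"
  using abs_le_dominating_constant[OF locally_dominated_ham_lin[OF mc_le_m, where p = p] _ data]
  unfolding K_ham_lin_def
  by (simp add: l1_norm_nonneg)

lemma abs_ham_quad_le:
  "\<bar>ham_quad p m v l e\<bar> \<le> K_ham_quad * (l1_norm (coords m) e * l1_norm (coords m) e)"
  using abs_le_dominating_constant[OF locally_dominated_ham_quad[where p = p] _ data] unfolding K_ham_quad_def
  by (simp add: l1_norm_nonneg)

end

lemma abs_ham_gradient_le: "c \<in> coords m \<Longrightarrow> \<bar>ham_gradient c s\<bar> \<le> K_ham_lin"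
  using abs_ham_lin_le[OF bounded_data_optimal[OF _ ustar_in_box], of s s "coord_unit c"]
    l1_norm_coord_unit[of c "coords m"] bound_constants_nonneg
  by (cases "s \<in> {0..T}") (auto simp: ham_gradient_def)

definition gap :: "real \<Rightarrow> real" where
  "gap t = control_ham p m mc (x t) (ustar t) (lam t)
         - control_ham p m mc (x t) (opt_control p mc (x t) (lam t)) (lam t)"

lemma gap_superlevel_sets: "{t\<in>{0..T}. \<delta> \<le> gap t} \<in> sets lborel"
proof -
  define g where "g t = control_ham p m mc (cut_off T x t) (cut_off T ustar t) (cut_off T lam t)
    - control_ham p m mc (cut_off T x t) (opt_control p mc (cut_off T x t) (cut_off T lam t)) (cut_off T lam t)"
    for t
  have "g \<in> borel_measurable lborel"
    unfolding g_def using state_cut_off_measurable costate_cut_off_measurable mc_le_m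
    by (intro borel_measurable_diff borel_measurable_control_ham borel_measurable_opt_control
        admissible_cut_off_measurable[OF admissible])
  then have "{t \<in> space lborel. \<delta> \<le> g t} \<in> sets lborel" by measurable
  moreover have "{t\<in>{0..T}. \<delta> \<le> gap t} = {0..T} \<inter> {t \<in> space lborel. \<delta> \<le> g t}"
    by (auto simp: g_def gap_def)
  ultimately show ?thesis by auto
qed

end

section \<open>The increment of the cost\<close>

context optimal_control_problem
begin

definition increment_density :: "(real \<Rightarrow> cidx \<Rightarrow> real) \<Rightarrow> (real \<Rightarrow> coord \<Rightarrow> real) \<Rightarrow> real \<Rightarrow> real" where
  "increment_density u y s =
     (control_ham p m mc (x s) (u s) (lam s) - control_ham p m mc (x s) (ustar s) (lam s))
     + (ham_lin p m mc (u s) (lam s) (x s) (\<lambda>c. y s c - x s c)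
        - ham_lin p m mc (ustar s) (lam s) (x s) (\<lambda>c. y s c - x s c))
     + ham_quad p m (u s) (lam s) (\<lambda>c. y s c - x s c)"

lemma running_cost_increment:
  "running_cost p mc (y s) (u s) - running_cost p mc (x s) (ustar s)
    = increment_density u y s + ham_lin p m mc (ustar s) (lam s) (x s) (\<lambda>c. y s c - x s c)
      - (\<Sum>c\<in>coords m. lam s c * (rhs p m (u s) (y s) c - rhs p m (ustar s) (x s) c))"
proof -
  have cost: "running_cost p mc z v = hamiltonian p m mc z v (lam s) - (\<Sum>c\<in>coords m. lam s c * rhs p m v z c)"
    for z v unfolding hamiltonian_def by simp
  have "hamiltonian p m mc (y s) (u s) (lam s) = hamiltonian p m mc (x s) (u s) (lam s)
      + ham_lin p m mc (u s) (lam s) (x s) (\<lambda>c. y s c - x s c) + ham_quad p m (u s) (lam s) (\<lambda>c. y s c - x s c)"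
    using hamiltonian_add_expand[of p m mc "x s" "\<lambda>c. y s c - x s c" "u s" "lam s"] by simp
  moreover have "hamiltonian p m mc (x s) (u s) (lam s) - hamiltonian p m mc (x s) (ustar s) (lam s)
      = control_ham p m mc (x s) (u s) (lam s) - control_ham p m mc (x s) (ustar s) (lam s)"
    using hamiltonian_minus_control_ham[of p m mc "x s" "u s" "lam s" "ustar s"] by simp
  ultimately show ?thesis
    unfolding cost increment_density_def by (simp add: sum_subtractf right_diff_distrib)
qed

context
  fixes u :: "real \<Rightarrow> cidx \<Rightarrow> real" and y :: "real \<Rightarrow> coord \<Rightarrow> real"
  assumes admissible_u: "admissible p mc T u" and state_y: "state_sol p m T x0 u y"
begin

definition competitor_radius :: real where
  "competitor_radius = state_bound p m T x0 u y + data_radius"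

lemma bounded_data_competitor:
  assumes "t \<in> {0..T}"
  shows "bounded_data m competitor_radius (y t) (u t) (lam t)"
    and "bounded_data m competitor_radius (x t) (ustar t) (lam t)"
proof -
  have box: "in_control_box p mc (u t)" using admissible_u assms by (simp add: admissible_iff)
  have "0 \<le> state_bound p m T x0 u y" by (rule state_bound_nonneg)
  then show "bounded_data m competitor_radius (x t) (ustar t) (lam t)"
    unfolding competitor_radius_def
    by (auto intro: bounded_data_mono[OF bounded_data_optimal[OF assms ustar_in_box[OF assms]]])
  have nonneg: "0 \<le> state_radius" "0 \<le> costate_bound" "0 \<le> control_bound"
    using state_bound_nonneg costate_bound_nonneg abs_control_le[OF box, of Ua] by auto
  have "\<bar>y t c\<bar> \<le> competitor_radius \<and> \<bar>lam t c\<bar> \<le> competitor_radius" if "c \<in> coords m" for c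
    using abs_state_le_state_bound[OF state_y that assms] abs_costate_le[OF that assms] nonneg
      state_bound_nonneg[of p m T x0 u y]
    unfolding competitor_radius_def data_radius_def by linarith
  moreover have "control_bound \<le> competitor_radius"
    using nonneg state_bound_nonneg[of p m T x0 u y] unfolding competitor_radius_def data_radius_def by linarith
  ultimately show "bounded_data m competitor_radius (y t) (u t) (lam t)"
    by (intro bounded_data_of_box[OF box]) auto
qed

lemma abs_increment_le:
  "c \<in> coords m \<Longrightarrow> t \<in> {0..T} \<Longrightarrow> \<bar>y t c - x t c\<bar> \<le> competitor_radius"
  using abs_state_le_state_bound[OF state_y, of c t] abs_state_le[of c t]
  unfolding competitor_radius_def data_radius_def
  using costate_bound_nonneg abs_control_le[OF ustar_in_box, of t Ua] by linarith

lemma running_cost_competitor_integrable: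
  "set_integrable lborel {0..T} (\<lambda>s. running_cost p mc (y s) (u s))"
proof (rule set_integrable_interval_bounded)
  show "(\<lambda>s. running_cost p mc (cut_off T y s) (cut_off T u s)) \<in> borel_measurable lborel"
    using state_sol_cut_off_measurable[OF state_y] T_pos
    by (intro borel_measurable_running_cost[OF _ _ mc_le_m] admissible_cut_off_measurable[OF admissible_u]) auto
  show "\<bar>running_cost p mc (y s) (u s)\<bar> \<le> local_bound m competitor_radius (\<lambda>x u l. running_cost p mc x u)"
    if "s \<in> {0..T}" for s
    using abs_le_local_bound[OF locally_bounded_running_cost[OF mc_le_m] bounded_data_competitor(1)[OF that]] .
qed (simp add: cut_off_def)

lemma running_cost_optimal_integrable:
  "set_integrable lborel {0..T} (\<lambda>s. running_cost p mc (x s) (ustar s))"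
proof (rule set_integrable_interval_bounded)
  show "(\<lambda>s. running_cost p mc (cut_off T x s) (cut_off T ustar s)) \<in> borel_measurable lborel"
    by (intro borel_measurable_running_cost[OF _ _ mc_le_m] admissible_cut_off_measurable[OF admissible]
        state_cut_off_measurable)
  show "\<bar>running_cost p mc (x s) (ustar s)\<bar> \<le> local_bound m competitor_radius (\<lambda>x u l. running_cost p mc x u)"
    if "s \<in> {0..T}" for s
    using abs_le_local_bound[OF locally_bounded_running_cost[OF mc_le_m] bounded_data_competitor(2)[OF that]] .
qed (simp add: cut_off_def)

definition rate_difference :: "coord \<Rightarrow> real \<Rightarrow> real" where
  "rate_difference c s = rhs p m (u s) (y s) c - rhs p m (ustar s) (x s) c"

definition rate_bound :: real where
  "rate_bound = 2 * local_bound m competitor_radius (\<lambda>x u l. l1_norm (coords m) (rhs p m u x)) + K_ham_lin"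

lemma abs_rate_difference_le:
  assumes "c \<in> coords m" "s \<in> {0..T}"
  shows "\<bar>rate_difference c s\<bar> \<le> rate_bound"
proof -
  let ?R = "local_bound m competitor_radius (\<lambda>x u l. l1_norm (coords m) (rhs p m u x))"
  have "\<bar>rhs p m (u s) (y s) c\<bar> \<le> ?R" "\<bar>rhs p m (ustar s) (x s) c\<bar> \<le> ?R"
    using abs_le_local_bound[OF locally_bounded_rhs_norm[where p = p] bounded_data_competitor(1)[OF assms(2)]]
      abs_le_local_bound[OF locally_bounded_rhs_norm[where p = p] bounded_data_competitor(2)[OF assms(2)]]
      abs_le_l1_norm[OF finite_coords assms(1), of "rhs p m (u s) (y s)"]
      abs_le_l1_norm[OF finite_coords assms(1), of "rhs p m (ustar s) (x s)"]
    by auto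
  then show ?thesis
    using bound_constants_nonneg unfolding rate_difference_def rate_bound_def by linarith
qed

lemma abs_ham_gradient_le_rate_bound: "c \<in> coords m \<Longrightarrow> \<bar>ham_gradient c s\<bar> \<le> rate_bound"
proof -
  assume "c \<in> coords m"
  then have "\<bar>ham_gradient c s\<bar> \<le> K_ham_lin" by (rule abs_ham_gradient_le)
  moreover have "0 \<le> local_bound m competitor_radius (\<lambda>x u l. l1_norm (coords m) (rhs p m u x))"
    by (rule local_bound_nonneg)
  ultimately show ?thesis unfolding rate_bound_def by linarith
qed

lemma cut_off_rate_difference_measurable:
  assumes "c \<in> coords m"
  shows "(\<lambda>s. indicator {0..T} s * rate_difference c s) \<in> borel_measurable lborel"
proof -
  have "(\<lambda>s. indicator {0..T} s * rate_difference c s) = (\<lambda>s. indicator {0..T} s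
      * (rhs p m (cut_off T u s) (cut_off T y s) c - rhs p m (cut_off T ustar s) (cut_off T x s) c))"
    by (auto simp: rate_difference_def indicator_def fun_eq_iff)
  moreover have "(\<lambda>s. rhs p m (cut_off T u s) (cut_off T y s) c) \<in> borel_measurable lborel"
    using state_sol_cut_off_measurable[OF state_y] T_pos assms
    by (intro borel_measurable_rhs admissible_cut_off_measurable[OF admissible_u]) auto
  moreover have "(\<lambda>s. rhs p m (cut_off T ustar s) (cut_off T x s) c) \<in> borel_measurable lborel"
    using assms
    by (intro borel_measurable_rhs admissible_cut_off_measurable[OF admissible] state_cut_off_measurable)
  ultimately show ?thesis by (simp del: measurable_lborel1 measurable_lborel2)
qed

lemma increment_eq_integral:
  assumes "c \<in> coords m" "s \<in> {0..T}"
  shows "y s c - x s c = (LINT t:{0..s}|lborel. indicator {0..T} t * rate_difference c t)"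
proof -
  have "set_integrable lborel {0..s} (\<lambda>t. rhs p m (u t) (y t) c)"
    "set_integrable lborel {0..s} (\<lambda>t. rhs p m (ustar t) (x t) c)"
    using state_y state assms unfolding state_sol_def by auto
  then have "y s c - x s c = (LINT t:{0..s}|lborel. rate_difference c t)"
    using state_sol_eq[OF state_y assms] state_sol_eq[OF state assms] unfolding rate_difference_def
    by (simp add: set_integral_diff)
  also have "\<dots> = (LINT t:{0..s}|lborel. indicator {0..T} t * rate_difference c t)"
    using assms(2) by (intro set_lebesgue_integral_cong) auto
  finally show ?thesis .
qed

text \<open>Integration by parts against the costate: since \<open>\<lambda>' = - \<partial>H/\<partial>x\<close> and \<open>\<lambda>(T) = 0\<close>, pairing
  \<open>\<lambda>\<close> with the derivative of \<open>y - x\<close> equals pairing \<open>\<partial>H/\<partial>x\<close> with \<open>y - x\<close>.\<close>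
lemma costate_pairing:
  assumes c: "c \<in> coords m"
  shows "set_integrable lborel {0..T} (\<lambda>s. lam s c * rate_difference c s)"
    and "set_integrable lborel {0..T} (\<lambda>s. ham_gradient c s * (y s c - x s c))"
    and "(LINT s:{0..T}|lborel. lam s c * rate_difference c s)
       = (LINT s:{0..T}|lborel. ham_gradient c s * (y s c - x s c))"
proof -
  have rate_measurable: "ham_gradient c \<in> borel_measurable lborel"
    using ham_gradient_integrable[OF c] by (rule borel_measurable_integrable)
  show "set_integrable lborel {0..T} (\<lambda>s. lam s c * rate_difference c s)"
  proof (rule set_integrable_interval_bounded)
    show "(\<lambda>s. cut_off T lam s c * (indicator {0..T} s * rate_difference c s)) \<in> borel_measurable lborel"
      using costate_cut_off_measurable[OF c] cut_off_rate_difference_measurable[OF c] by simp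
    show "\<bar>lam s c * rate_difference c s\<bar> \<le> costate_bound * rate_bound" if "s \<in> {0..T}" for s
      using abs_costate_le[OF c that] abs_rate_difference_le[OF c that]
      unfolding abs_mult by (intro mult_mono) auto
  qed simp
  show "set_integrable lborel {0..T} (\<lambda>s. ham_gradient c s * (y s c - x s c))"
  proof (rule set_integrable_interval_bounded)
    show "(\<lambda>s. ham_gradient c s * (cut_off T y s c - cut_off T x s c)) \<in> borel_measurable lborel"
      using rate_measurable state_sol_cut_off_measurable[OF state_y _ c] state_cut_off_measurable[OF c] T_pos
      by (intro borel_measurable_times borel_measurable_diff) auto
    show "\<bar>ham_gradient c s * (y s c - x s c)\<bar> \<le> rate_bound * competitor_radius" if "s \<in> {0..T}" for s
      using abs_ham_gradient_le_rate_bound[OF c, of s] abs_increment_le[OF c that]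
      unfolding abs_mult by (intro mult_mono) auto
  qed simp
  have "(LINT s:{0..T}|lborel. lam s c * rate_difference c s)
      = (LINT t:{0..T}|lborel.
           (LINT s:{t..T}|lborel. ham_gradient c s) * (indicator {0..T} t * rate_difference c t))"
    by (intro set_lebesgue_integral_cong) (auto simp: costate_eq[OF c])
  also have "\<dots> = (LINT s:{0..T}|lborel. ham_gradient c s
      * (LINT t:{0..s}|lborel. indicator {0..T} t * rate_difference c t))"
    using rate_measurable cut_off_rate_difference_measurable[OF c] abs_rate_difference_le[OF c]
      abs_ham_gradient_le_rate_bound[OF c] order_trans[OF abs_ge_zero abs_ham_gradient_le_rate_bound[OF c]]
    by (intro set_integral_swap_triangle[where M = rate_bound]) (auto simp: indicator_def)
  also have "\<dots> = (LINT s:{0..T}|lborel. ham_gradient c s * (y s c - x s c))"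
    by (intro set_lebesgue_integral_cong) (auto simp: increment_eq_integral[OF c])
  finally show "(LINT s:{0..T}|lborel. lam s c * rate_difference c s)
      = (LINT s:{0..T}|lborel. ham_gradient c s * (y s c - x s c))" .
qed

lemma adjoint_identity:
  shows "set_integrable lborel {0..T} (\<lambda>s. \<Sum>c\<in>coords m. lam s c * rate_difference c s)"
    and "set_integrable lborel {0..T} (\<lambda>s. ham_lin p m mc (ustar s) (lam s) (x s) (\<lambda>c. y s c - x s c))"
    and "(LINT s:{0..T}|lborel. \<Sum>c\<in>coords m. lam s c * rate_difference c s)
       = (LINT s:{0..T}|lborel. ham_lin p m mc (ustar s) (lam s) (x s) (\<lambda>c. y s c - x s c))"
proof -
  have ham_lin_eq: "ham_lin p m mc (ustar s) (lam s) (x s) (\<lambda>c. y s c - x s c)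
      = (\<Sum>c\<in>coords m. ham_gradient c s * (y s c - x s c))" if "s \<in> {0..T}" for s
    using that by (subst ham_lin_coord_expand[OF mc_le_m]) (simp add: ham_gradient_def mult.commute)
  note pairing_sum = set_integral_sum[OF finite_coords costate_pairing(1)]
  note rate_sum = set_integral_sum[OF finite_coords costate_pairing(2)]
  show "set_integrable lborel {0..T} (\<lambda>s. \<Sum>c\<in>coords m. lam s c * rate_difference c s)"
    by (rule pairing_sum(1))
  show "set_integrable lborel {0..T} (\<lambda>s. ham_lin p m mc (ustar s) (lam s) (x s) (\<lambda>c. y s c - x s c))"
    using rate_sum(1) ham_lin_eq by (subst set_integrable_cong[OF refl refl]) auto
  have "(LINT s:{0..T}|lborel. \<Sum>c\<in>coords m. lam s c * rate_difference c s)
      = (LINT s:{0..T}|lborel. \<Sum>c\<in>coords m. ham_gradient c s * (y s c - x s c))"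
    using pairing_sum(2) rate_sum(2) costate_pairing(3) by simp
  also have "\<dots> = (LINT s:{0..T}|lborel. ham_lin p m mc (ustar s) (lam s) (x s) (\<lambda>c. y s c - x s c))"
    using ham_lin_eq by (intro set_lebesgue_integral_cong) auto
  finally show "(LINT s:{0..T}|lborel. \<Sum>c\<in>coords m. lam s c * rate_difference c s)
      = (LINT s:{0..T}|lborel. ham_lin p m mc (ustar s) (lam s) (x s) (\<lambda>c. y s c - x s c))" .
qed

lemma cost_increment:
  shows "set_integrable lborel {0..T} (increment_density u y)"
    and "cost_J p mc T y u - cost_J p mc T x ustar = (LINT s:{0..T}|lborel. increment_density u y s)"
proof -
  let ?L = "\<lambda>s. running_cost p mc (y s) (u s) - running_cost p mc (x s) (ustar s)"
  let ?D = "\<lambda>s. ham_lin p m mc (ustar s) (lam s) (x s) (\<lambda>c. y s c - x s c)"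
  let ?P = "\<lambda>s. \<Sum>c\<in>coords m. lam s c * rate_difference c s"
  have L_int: "set_integrable lborel {0..T} ?L"
    using running_cost_competitor_integrable running_cost_optimal_integrable by auto
  have eq: "increment_density u y s = ?L s - ?D s + ?P s" for s
    using running_cost_increment[of y s u] by (simp add: rate_difference_def)
  show int: "set_integrable lborel {0..T} (increment_density u y)"
    unfolding eq using L_int adjoint_identity(1,2) by auto
  have "cost_J p mc T y u - cost_J p mc T x ustar = (LINT s:{0..T}|lborel. ?L s)"
    unfolding cost_J_def
    using set_integral_diff(2)[OF running_cost_competitor_integrable running_cost_optimal_integrable] by simp
  also have "\<dots> = (LINT s:{0..T}|lborel. increment_density u y s + ?D s - ?P s)"
    by (simp add: eq)
  also have "\<dots> = (LINT s:{0..T}|lborel. increment_density u y s)"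
    using int adjoint_identity by (simp add: set_integral_add set_integral_diff)
  finally show "cost_J p mc T y u - cost_J p mc T x ustar
      = (LINT s:{0..T}|lborel. increment_density u y s)" .
qed

end

end

section \<open>Needle variations\<close>

definition clip :: "real \<Rightarrow> real" where
  "clip r = max (-1) (min 1 r)"

lemma abs_clip_le: "\<bar>clip r\<bar> \<le> 1"
  and clip_lipschitz: "\<bar>clip a - clip b\<bar> \<le> \<bar>a - b\<bar>"
  and clip_id: "\<bar>r\<bar> \<le> 1 \<Longrightarrow> clip r = r"
  and clip_0 [simp]: "clip 0 = 0"
  unfolding clip_def by auto

lemma borel_measurable_clip: "f \<in> borel_measurable lborel \<Longrightarrow> (\<lambda>s. clip (f s)) \<in> borel_measurable lborel"
  unfolding clip_def measurable_lborel2 by (intro borel_measurable_max borel_measurable_min) auto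

context optimal_control_problem
begin

definition needle :: "real set \<Rightarrow> real \<Rightarrow> cidx \<Rightarrow> real" where
  "needle A t = (if t \<in> A then opt_control p mc (x t) (lam t) else ustar t)"

lemma needle_in_box: "t \<in> {0..T} \<Longrightarrow> in_control_box p mc (needle A t)"
  using ustar_in_box opt_control_in_box[OF pos] by (simp add: needle_def)

lemma cut_off_in_box: "(\<And>t. t \<in> {0..T} \<Longrightarrow> in_control_box p mc (u t)) \<Longrightarrow> in_control_box p mc (cut_off T u s)"
  by (cases "s \<in> {0..T}") (auto simp: zero_in_control_box[OF pos])

lemma bounded_data_cut_off:
  assumes "in_control_box p mc (cut_off T u s)" "\<And>c. c \<in> coords m \<Longrightarrow> \<bar>e c\<bar> \<le> 1"
  shows "bounded_data m data_radius (\<lambda>c. cut_off T x s c + e c) (cut_off T u s) (cut_off T lam s)"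
proof (cases "s \<in> {0..T}")
  case True
  then have "bounded_data m data_radius (\<lambda>c. cut_off T x s c + e c) (cut_off T u s) (lam s)"
    using assms by (intro bounded_data_near_optimal) auto
  then show ?thesis using True by simp
next
  case False
  have nonneg: "0 \<le> state_radius" "0 \<le> costate_bound" "0 \<le> control_bound"
    using state_bound_nonneg costate_bound_nonneg abs_control_le[OF zero_in_control_box[OF pos]] by auto
  have "\<bar>e c\<bar> \<le> data_radius \<and> \<bar>0 :: real\<bar> \<le> data_radius" if "c \<in> coords m" for c
    using assms(2)[OF that] nonneg unfolding data_radius_def by linarith
  moreover have "control_bound \<le> data_radius" using nonneg unfolding data_radius_def by linarith
  ultimately have "bounded_data m data_radius e (\<lambda>_. 0) (\<lambda>_. 0)"
    by (intro bounded_data_of_box[OF zero_in_control_box[OF pos]]) auto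
  then show ?thesis using False by simp
qed

definition needle_lip :: real where
  "needle_lip = K_lin + 2 * card (coords m) * K_quad"

definition needle_radius :: real where
  "needle_radius = 2 * K_rhs * exp (needle_lip * T)"

definition needle_curvature :: real where
  "needle_curvature = 2 * K_ham_lin * needle_radius + T * K_ham_quad * needle_radius\<^sup>2"

context
  fixes A :: "real set"
  assumes A_sets: "A \<in> sets lborel" and A_horizon: "A \<subseteq> {0..T}"
begin

lemma cut_off_needle_measurable: "(\<lambda>t. cut_off T (needle A) t k) \<in> borel_measurable lborel"
proof -
  have "cut_off T (needle A) t k = indicator A t * opt_control p mc (cut_off T x t) (cut_off T lam t) k
      + (1 - indicator A t) * cut_off T ustar t k" for t
    using A_horizon by (cases "t \<in> A"; cases "t \<in> {0..T}") (auto simp: needle_def)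
  moreover have "(\<lambda>t. opt_control p mc (cut_off T x t) (cut_off T lam t) k) \<in> borel_measurable lborel"
    by (intro borel_measurable_opt_control[OF _ _ mc_le_m] state_cut_off_measurable costate_cut_off_measurable)
  ultimately show ?thesis
    using A_sets admissible_cut_off_measurable[OF admissible]
    by (simp del: measurable_lborel1 measurable_lborel2)
qed

lemma needle_admissible: "admissible p mc T (needle A)"
  using cut_off_needle_measurable needle_in_box
  unfolding admissible_iff set_borel_measurable_def cut_off_def by simp

text \<open>Clipping the increment makes it bounded and
  globally Lipschitz, so that Picard iteration applies; the increments that actually occur have
  size at most 1, where clipping does nothing.\<close>
definition needle_field :: "real \<Rightarrow> (coord \<Rightarrow> real) \<Rightarrow> coord \<Rightarrow> real" where
  "needle_field s v c = rhs p m (cut_off T (needle A) s) (\<lambda>c'. cut_off T x s c' + clip (v c')) c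
                      - rhs p m (cut_off T ustar s) (cut_off T x s) c"

lemma needle_field_measurable:
  assumes "\<And>c. c \<in> coords m \<Longrightarrow> (\<lambda>s. v s c) \<in> borel_measurable lborel" "c \<in> coords m"
  shows "(\<lambda>s. needle_field s (v s) c) \<in> borel_measurable lborel"
  unfolding needle_field_def
  using assms state_cut_off_measurable
  by (intro borel_measurable_diff borel_measurable_rhs cut_off_needle_measurable
      admissible_cut_off_measurable[OF admissible] borel_measurable_add borel_measurable_clip) auto

lemma needle_field_norm_le: "l1_norm (coords m) (needle_field s v) \<le> 2 * K_rhs"
proof -
  have data: "bounded_data m data_radius (\<lambda>c. cut_off T x s c + clip (v c)) (cut_off T (needle A) s) (cut_off T lam s)"
    "bounded_data m data_radius (cut_off T x s) (cut_off T ustar s) (cut_off T lam s)"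
    using abs_clip_le needle_in_box bounded_data_cut_off[where u = ustar and e = "\<lambda>_. 0"]
    by (auto intro!: bounded_data_cut_off cut_off_in_box ustar_in_box)
  have "l1_norm (coords m) (needle_field s v)
      \<le> l1_norm (coords m) (rhs p m (cut_off T (needle A) s) (\<lambda>c'. cut_off T x s c' + clip (v c')))
        + l1_norm (coords m) (rhs p m (cut_off T ustar s) (cut_off T x s))"
    unfolding l1_norm_def needle_field_def sum.distrib[symmetric] by (intro sum_mono abs_triangle_ineq4)
  also have "\<dots> \<le> K_rhs + K_rhs"
    using rhs_norm_le[OF data(1)] rhs_norm_le[OF data(2)] by simp
  finally show ?thesis by simp
qed

lemma abs_needle_field_le: "c \<in> coords m \<Longrightarrow> \<bar>needle_field s v c\<bar> \<le> 2 * K_rhs"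
  using abs_le_l1_norm[OF finite_coords] needle_field_norm_le order_trans by blast

lemma needle_field_lipschitz:
  "l1_norm (coords m) (\<lambda>c. needle_field s v c - needle_field s w c)
    \<le> needle_lip * l1_norm (coords m) (\<lambda>c. v c - w c)"
proof -
  define z where "z c = cut_off T x s c + clip (w c)" for c
  define e where "e c = clip (v c) - clip (w c)" for c
  have data: "bounded_data m data_radius z (cut_off T (needle A) s) (cut_off T lam s)"
    unfolding z_def using abs_clip_le needle_in_box by (intro bounded_data_cut_off cut_off_in_box) auto
  have e_le: "l1_norm (coords m) e \<le> l1_norm (coords m) (\<lambda>c. v c - w c)"
    unfolding l1_norm_def e_def by (intro sum_mono clip_lipschitz)
  have e_card: "l1_norm (coords m) e \<le> card (coords m) * 2"
    by (rule l1_norm_le_card) (auto simp: e_def intro: order_trans[OF abs_triangle_ineq4]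
        add_mono[OF abs_clip_le abs_clip_le, simplified])
  have "(\<lambda>c'. cut_off T x s c' + clip (w c')) = z" "(\<lambda>c'. cut_off T x s c' + clip (v c')) = (\<lambda>c. z c + e c)"
    by (auto simp: z_def e_def)
  then have diff_eq: "(\<lambda>c. needle_field s v c - needle_field s w c)
      = (\<lambda>c. rhs_lin p m (cut_off T (needle A) s) z e c + rhs_quad p m (cut_off T (needle A) s) e c)"
    unfolding needle_field_def by (simp add: rhs_add_expand)
  have "l1_norm (coords m) (\<lambda>c. needle_field s v c - needle_field s w c)
      \<le> l1_norm (coords m) (rhs_lin p m (cut_off T (needle A) s) z e)
        + l1_norm (coords m) (rhs_quad p m (cut_off T (needle A) s) e)"
    unfolding l1_norm_def diff_eq sum.distrib[symmetric] by (intro sum_mono abs_triangle_ineq)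
  also have "\<dots> \<le> K_lin * l1_norm (coords m) e + K_quad * (l1_norm (coords m) e * l1_norm (coords m) e)"
    using rhs_lin_norm_le[OF data] rhs_quad_norm_le[OF data] by (rule add_mono)
  also have "\<dots> \<le> needle_lip * l1_norm (coords m) e"
  proof -
    have "K_quad * (l1_norm (coords m) e * l1_norm (coords m) e)
        \<le> K_quad * (card (coords m) * 2 * l1_norm (coords m) e)"
      using e_card bound_constants_nonneg l1_norm_nonneg[of "coords m" e]
      by (intro mult_left_mono mult_right_mono) auto
    then show ?thesis unfolding needle_lip_def by (simp add: algebra_simps)
  qed
  also have "\<dots> \<le> needle_lip * l1_norm (coords m) (\<lambda>c. v c - w c)"
    using e_le bound_constants_nonneg unfolding needle_lip_def by (simp add: mult_left_mono)
  finally show ?thesis .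
qed

lemma needle_field_first_step:
  assumes "t \<in> {0..T}"
  shows "l1_norm (coords m) (\<lambda>c. LINT s:{0..t}|lborel. needle_field s (\<lambda>_. 0) c)
    \<le> 2 * K_rhs * measure lborel A"
proof -
  have outside_A: "needle_field s (\<lambda>_. 0) = (\<lambda>c. 0)" if "s \<notin> A" for s
    using that A_horizon by (cases "s \<in> {0..T}") (auto simp: needle_field_def needle_def fun_eq_iff)
  have field_int: "set_integrable lborel {0..t} (\<lambda>s. needle_field s (\<lambda>_. 0) c)" if "c \<in> coords m" for c
    by (rule set_integrable_bounded[OF needle_field_measurable[of "\<lambda>_ _. 0", OF _ that] _ order.refl
        abs_needle_field_le[OF that]]) auto
  have "emeasure lborel A \<le> emeasure lborel {0..T}" using A_horizon by (intro emeasure_mono) auto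
  also have "\<dots> < \<infinity>" using T_pos by simp
  finally have A_finite: "emeasure lborel A < \<infinity>" .
  have "l1_norm (coords m) (\<lambda>c. LINT s:{0..t}|lborel. needle_field s (\<lambda>_. 0) c)
      \<le> (LINT s:{0..t}|lborel. l1_norm (coords m) (needle_field s (\<lambda>_. 0)))"
    using l1_norm_set_integral_le(2)[OF finite_coords field_int] by simp
  also have "\<dots> \<le> (LINT s:{0..t}|lborel. 2 * K_rhs * indicator A s)"
  proof (rule set_integral_mono)
    show "set_integrable lborel {0..t} (\<lambda>s. l1_norm (coords m) (needle_field s (\<lambda>_. 0)))"
      using l1_norm_set_integral_le(1)[OF finite_coords field_int] by simp
    show "set_integrable lborel {0..t} (\<lambda>s. 2 * K_rhs * indicator A s)"
      using A_sets bound_constants_nonneg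
      by (intro set_integrable_bounded[of _ _ 0 t "2 * K_rhs"]) (auto simp: indicator_def)
    show "l1_norm (coords m) (needle_field s (\<lambda>_. 0)) \<le> 2 * K_rhs * indicator A s" for s
      using needle_field_norm_le[of s] outside_A[of s] by (cases "s \<in> A") auto
  qed
  also have "\<dots> \<le> (\<integral>s. 2 * K_rhs * indicator A s \<partial>lborel)"
    unfolding set_lebesgue_integral_def
    using A_sets A_finite bound_constants_nonneg
    by (intro integral_mono integrable_mult_indicator integrable_mult_right integrable_real_indicator)
       (auto simp: indicator_def)
  also have "\<dots> = 2 * K_rhs * measure lborel A" using A_sets A_finite by simp
  finally show ?thesis .
qed

lemma needle_increment_state_sol:
  assumes measurable: "\<And>c. c \<in> coords m \<Longrightarrow> (\<lambda>s. d s c) \<in> borel_measurable lborel"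
    and volterra: "\<And>t c. t \<in> {0..T} \<Longrightarrow> c \<in> coords m
        \<Longrightarrow> d t c = (LINT s:{0..t}|lborel. needle_field s (d s) c)"
    and small: "\<And>t c. t \<in> {0..T} \<Longrightarrow> c \<in> coords m \<Longrightarrow> \<bar>d t c\<bar> \<le> 1"
    and outside: "\<And>t c. c \<notin> coords m \<Longrightarrow> d t c = 0"
  shows "state_sol p m T x0 (needle A) (\<lambda>t c. x t c + d t c)"
  unfolding state_sol_def
proof (intro ballI conjI)
  fix c assume c: "c \<in> coords m"
  have field_int: "set_integrable lborel {0..t} (\<lambda>s. needle_field s (d s) c)" for t
    by (rule set_integrable_bounded[OF needle_field_measurable[OF measurable c] _ order.refl
        abs_needle_field_le[OF c]]) auto
  have "d 0 c = (LINT s:{0..0}|lborel. needle_field s (d s) c)"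
    using volterra[of 0 c] c T_pos by simp
  also have "\<dots> = integral {0..0} (\<lambda>s. needle_field s (d s) c)"
    by (rule set_borel_integral_eq_integral(2)[OF field_int])
  finally have d0: "d 0 c = 0" by simp
  then show "x 0 c + d 0 c = x0 c" using state_sol_initial[OF state c] by simp
  fix t assume t: "t \<in> {0..T}"
  have rate: "rhs p m (needle A s) (\<lambda>c. x s c + d s c) c = state_rate p m T ustar x c s + needle_field s (d s) c"
    if "s \<in> {0..t}" for s
  proof -
    have "s \<in> {0..T}" using that t by auto
    moreover have "clip (d s c') = d s c'" for c'
      using small[OF \<open>s \<in> {0..T}\<close>, of c'] outside[of c' s] by (cases "c' \<in> coords m") (auto simp: clip_id)
    ultimately show ?thesis by (simp add: needle_field_def state_rate_def)
  qed
  have rate_int: "set_integrable lborel {0..t} (state_rate p m T ustar x c)"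
    unfolding set_integrable_def
    by (intro integrable_mult_indicator state_rate_integrable[OF state _ c]) (use T_pos in auto)
  show "set_integrable lborel {0..t} (\<lambda>s. rhs p m (needle A s) (\<lambda>c. x s c + d s c) c)"
    using set_integral_add(1)[OF rate_int field_int] rate
    by (subst set_integrable_cong[OF refl refl]) auto
  have "x t c + d t c - (x 0 c + d 0 c) = (LINT s:{0..t}|lborel. state_rate p m T ustar x c s)
      + (LINT s:{0..t}|lborel. needle_field s (d s) c)"
    using state_sol_eq_state_rate[OF state c t] volterra[OF t c] d0 state_sol_initial[OF state c] by simp
  also have "\<dots> = (LINT s:{0..t}|lborel. state_rate p m T ustar x c s + needle_field s (d s) c)"
    using set_integral_add(2)[OF rate_int field_int] by simp
  also have "\<dots> = (LINT s:{0..t}|lborel. rhs p m (needle A s) (\<lambda>c. x s c + d s c) c)"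
    using rate by (intro set_lebesgue_integral_cong) auto
  finally show "x t c + d t c - (x 0 c + d 0 c)
      = (LINT s:{0..t}|lborel. rhs p m (needle A s) (\<lambda>c. x s c + d s c) c)" .
qed

lemma needle_state:
  assumes small: "needle_radius * measure lborel A \<le> 1"
  obtains y where "state_sol p m T x0 (needle A) y"
    and "\<And>t. t \<in> {0..T} \<Longrightarrow> l1_norm (coords m) (\<lambda>c. y t c - x t c) \<le> needle_radius * measure lborel A"
proof -
  interpret perturbation: volterra_lipschitz "coords m" needle_field T needle_lip "2 * K_rhs"
    "2 * K_rhs * measure lborel A"
    using T_pos bound_constants_nonneg needle_field_measurable abs_needle_field_le needle_field_lipschitz
      needle_field_first_step
    by unfold_locales (auto simp: needle_lip_def)
  have norm: "l1_norm (coords m) (perturbation.solution t) \<le> needle_radius * measure lborel A"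
    if "t \<in> {0..T}" for t
    using perturbation.solution_bound[OF that] by (simp add: needle_radius_def ac_simps)
  have "state_sol p m T x0 (needle A) (\<lambda>t c. x t c + perturbation.solution t c)"
    using perturbation.solution_measurable perturbation.solution_eq perturbation.solution_outside
      order_trans[OF abs_le_l1_norm[OF finite_coords] order_trans[OF norm small]]
    by (intro needle_increment_state_sol) blast+
  with norm show ?thesis using that by auto
qed

end

end

context optimal_control_problem
begin

lemma needle_increment_le:
  assumes "\<And>t. t \<in> A \<Longrightarrow> \<delta> \<le> gap t"
    and "\<And>t. t \<in> {0..T} \<Longrightarrow> l1_norm (coords m) (\<lambda>c. y t c - x t c) \<le> a" and s: "s \<in> {0..T}"
  shows "increment_density (needle A) y s \<le> indicator A s * (2 * K_ham_lin * a - \<delta>) + K_ham_quad * a\<^sup>2"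
proof -
  let ?e = "\<lambda>c. y s c - x s c"
  have data: "bounded_data m data_radius (x s) (needle A s) (lam s)"
    "bounded_data m data_radius (x s) (ustar s) (lam s)"
    using bounded_data_optimal[OF s] needle_in_box[OF s] ustar_in_box[OF s] by auto
  have e: "0 \<le> l1_norm (coords m) ?e" "l1_norm (coords m) ?e \<le> a"
    using assms(2)[OF s] l1_norm_nonneg by auto
  have lin: "\<bar>ham_lin p m mc v (lam s) (x s) ?e\<bar> \<le> K_ham_lin * a"
    if "bounded_data m data_radius (x s) v (lam s)" for v
    using abs_ham_lin_le[OF that, of ?e] mult_left_mono[OF e(2), of K_ham_lin] bound_constants_nonneg
    by linarith
  have "ham_quad p m (needle A s) (lam s) ?e \<le> K_ham_quad * (l1_norm (coords m) ?e * l1_norm (coords m) ?e)"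
    using abs_ham_quad_le[OF data(1)] by (simp add: abs_le_iff)
  also have "\<dots> \<le> K_ham_quad * a\<^sup>2"
    unfolding power2_eq_square using e bound_constants_nonneg by (intro mult_left_mono mult_mono) auto
  finally have quad: "ham_quad p m (needle A s) (lam s) ?e \<le> K_ham_quad * a\<^sup>2" .
  show ?thesis
  proof (cases "s \<in> A")
    case True
    then have "control_ham p m mc (x s) (needle A s) (lam s) - control_ham p m mc (x s) (ustar s) (lam s) \<le> - \<delta>"
      using assms(1)[OF True] True by (simp add: needle_def gap_def)
    then show ?thesis
      using True quad lin[OF data(1)] lin[OF data(2)] unfolding increment_density_def by auto
  next
    case False
    then show ?thesis using quad unfolding increment_density_def by (simp add: needle_def)
  qed
qed

lemma needle_cost_le:
  assumes A: "A \<in> sets lborel" "A \<subseteq> {t\<in>{0..T}. \<delta> \<le> gap t}"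
    and small: "needle_radius * measure lborel A \<le> 1"
  obtains y where "state_sol p m T x0 (needle A) y"
    and "cost_J p mc T y (needle A) - cost_J p mc T x ustar
           \<le> measure lborel A * (measure lborel A * needle_curvature - \<delta>)"
proof -
  define \<mu> where "\<mu> = measure lborel A"
  define a where "a = needle_radius * \<mu>"
  have horizon: "A \<subseteq> {0..T}" using A(2) by auto
  obtain y where y: "state_sol p m T x0 (needle A) y"
    and close: "\<And>t. t \<in> {0..T} \<Longrightarrow> l1_norm (coords m) (\<lambda>c. y t c - x t c) \<le> a"
    using needle_state[OF A(1) horizon small] unfolding a_def \<mu>_def by blast
  note adm = needle_admissible[OF A(1) horizon]
  note affine = set_integral_indicator_affine[OF A(1) horizon less_imp_le[OF T_pos],
    of "2 * K_ham_lin * a - \<delta>" "K_ham_quad * a\<^sup>2"]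
  have "cost_J p mc T y (needle A) - cost_J p mc T x ustar
      = (LINT s:{0..T}|lborel. increment_density (needle A) y s)"
    by (rule cost_increment(2)[OF adm y])
  also have "\<dots> \<le> (LINT s:{0..T}|lborel. indicator A s * (2 * K_ham_lin * a - \<delta>) + K_ham_quad * a\<^sup>2)"
    by (rule set_integral_mono[OF cost_increment(1)[OF adm y] affine(1)], rule needle_increment_le)
       (use A(2) close in auto)
  also have "\<dots> = \<mu> * (2 * K_ham_lin * a - \<delta>) + T * (K_ham_quad * a\<^sup>2)"
    unfolding \<mu>_def by (rule affine(2))
  also have "\<dots> = \<mu> * (\<mu> * needle_curvature - \<delta>)"
    unfolding a_def needle_curvature_def by (simp add: algebra_simps power2_eq_square)
  finally show ?thesis using that y unfolding \<mu>_def by blast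
qed

lemma gap_superlevel_null:
  assumes "0 < \<delta>"
  shows "{t\<in>{0..T}. \<delta> \<le> gap t} \<in> null_sets lborel"
proof (rule ccontr)
  let ?B = "{t\<in>{0..T}. \<delta> \<le> gap t}"
  let ?E = needle_radius and ?C = needle_curvature
  assume "?B \<notin> null_sets lborel"
  have "0 \<le> ?E" "0 \<le> ?C"
    using bound_constants_nonneg T_pos unfolding needle_radius_def needle_curvature_def by auto
  then have "0 < min (1 / (?E + 1)) (\<delta> / (?C + 1))" using assms by simp
  then obtain A where A: "A \<in> sets lborel" "A \<subseteq> ?B" "0 < measure lborel A"
    and small: "measure lborel A \<le> min (1 / (?E + 1)) (\<delta> / (?C + 1))"
    using exists_small_positive_subset[OF gap_superlevel_sets _ \<open>?B \<notin> null_sets lborel\<close> T_pos] by blast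
  have "?E * measure lborel A \<le> ?E * (1 / (?E + 1))"
    using small \<open>0 \<le> ?E\<close> by (intro mult_left_mono) auto
  also have "\<dots> \<le> 1" using \<open>0 \<le> ?E\<close> by (simp add: field_simps)
  finally obtain y where y: "state_sol p m T x0 (needle A) y"
    and decrease: "cost_J p mc T y (needle A) - cost_J p mc T x ustar
           \<le> measure lborel A * (measure lborel A * ?C - \<delta>)"
    using needle_cost_le[OF A(1,2)] by blast
  have "measure lborel A * ?C \<le> \<delta> / (?C + 1) * ?C"
    using small \<open>0 \<le> ?C\<close> by (intro mult_right_mono) auto
  also have "\<dots> < \<delta>" using \<open>0 \<le> ?C\<close> assms by (simp add: field_simps)
  finally have "measure lborel A * (measure lborel A * ?C - \<delta>) < 0"
    using A(3) by (simp add: mult_pos_neg)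
  moreover have "A \<subseteq> {0..T}" using A(2) by auto
  ultimately show False
    using decrease optimal[OF needle_admissible[OF A(1)] y] by fastforce
qed

lemma AE_optimal_control_eq: "AE t in lborel. t \<in> {0..T} \<longrightarrow> ustar t = opt_control p mc (x t) (lam t)"
proof -
  have "AE t in lborel. t \<notin> (\<Union>n. {t\<in>{0..T}. 1 / Suc n \<le> gap t})"
    by (intro AE_not_in null_sets_UN gap_superlevel_null) auto
  then show ?thesis
  proof (rule AE_mp, intro AE_I2 impI)
    fix t assume t: "t \<in> {0..T}" and "t \<notin> (\<Union>n. {t\<in>{0..T}. 1 / Suc n \<le> gap t})"
    then have "\<not> 1 / Suc n \<le> gap t" for n by simp
    then have below: "gap t < 1 / Suc n" for n by (simp only: not_le)
    have "gap t \<le> 0"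
    proof (rule ccontr)
      assume "\<not> gap t \<le> 0"
      then obtain n where "0 < n" "inverse (real n) < gap t"
        using ex_inverse_of_nat_less[of "gap t"] by auto
      then show False using below[of "n - 1"] by (simp add: inverse_eq_divide)
    qed
    then show "ustar t = opt_control p mc (x t) (lam t)"
      unfolding gap_def by (rule control_ham_gap_nonpos_imp_eq_opt_control[OF pos mc_le_m ustar_in_box[OF t]])
  qed
qed

end

theorem theorem6:
  fixes p :: params and m mc :: nat and T :: real
    and x0 :: "coord \<Rightarrow> real"
    and ustar :: "real \<Rightarrow> cidx \<Rightarrow> real"
    and x lam :: "real \<Rightarrow> coord \<Rightarrow> real"
  assumes "m \<ge> 1" and "1 \<le> mc" and "mc \<le> m" and "T > 0"
    and "pos_params p m mc"
    and "\<forall>c\<in>coords m. x0 c \<ge> 0"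
    and "admissible p mc T ustar"
    and "state_sol p m T x0 ustar x"
    and "\<forall>u y. admissible p mc T u \<and> state_sol p m T x0 u y
               \<longrightarrow> cost_J p mc T x ustar \<le> cost_J p mc T y u"
    and "adjoint_sol p m mc T ustar x lam"
  shows "AE t in lborel. t \<in> {0..T} \<longrightarrow>
     ustar t Ua = max 0 (min ((lam t CE * x t CE + lam t CL * x t CL) / (2 * A_a p)) (uAmax p)) \<and>
     ustar t Us = max 0 (min ((lam t CSs * x t CSs + lam t CSi * x t CSi) / (2 * A_s p)) (uSmax p)) \<and>
     ustar t Uk = max 0 (min (alpha_s p * lam t CSs * (x t CSs + x t CSi)\<^sup>2
                              / (2 * kappa_s p * A_k p)) (uKmax p)) \<and>
     (\<forall>j\<in>{1..mc}. ustar t (Uj j) =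
        max 0 (min (lam t (CMi j) * x t (CMi j) / (2 * A_j p j)) (uMmax p j)))"
proof -
  interpret optimal_control_problem p m mc T x0 ustar x lam
    using assms by unfold_locales auto
  show ?thesis
    using AE_optimal_control_eq
    by eventually_elim
       (auto simp: opt_control_def clamp_def switching_def weight_def control_max_def
         divide_divide_eq_left ac_simps)
qed

end
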